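(* Let $t\ge 1$ and let $v_0,\dots,v_{t-1}\in\mathbb{R}$. Let $P_0,\dots,P_{t-1}$ be a $t$-outcome verifier (in the sense of the context). Define \[ v=\sup\Big\{\textstyle\sum_{i=0}^{t-1} v_i\,\langle P_i, X\rangle \;:\; X \text{ a 1-fold strategy}\Big\}, \] and for an integer $n\ge 1$ define \[ v'=\sup\Big\{\textstyle\sum_{i_1,\dots,i_n\in\{0,\dots,t-1\}} \tfrac{1}{n}\,(v_{i_1}+\cdots+v_{i_n})\,\langle P_{i_1}\otimes\cdots\otimes P_{i_n}, X\rangle \;:\; X \text{ an } n\text{-fold strategy}\Big\}. \] Then $v'=v$.
   Context: Fix an integer $r\ge1$ and finite-dimensional complex Hilbert spaces $\mathcal{X}_1,\dots,\mathcal{X}_r$ (questions) and $\mathcal{Y}_1,\dots,\mathcal{Y}_r$ (answers). Write $\mathcal{X}_{1\ldots j}=\mathcal{X}_1\otimes\cdots\otimes\mathcal{X}_j$, similarly $\mathcal{Y}_{1\ldots j}$; tensor products of spaces taken in different orders are implicitly identified via the obvious permutation of factors. $\mathrm{Pos}(\cdot)$ denotes positive semidefinite operators, $\mathrm{D}(\cdot)$ density operators, $\langle A,B\rangle=\mathrm{Tr}(A^*B)$, and $\mathbb{I}$ identities. A $t$-outcome verifier is a tuple $P_0,\dots,P_{t-1}\in\mathrm{Pos}(\mathcal{Y}_{1\ldots r}\otimes\mathcal{X}_{1\ldots r})$ for which there exist $R_1=\rho\in\mathrm{D}(\mathcal{X}_1)$ and $R_j\in\mathrm{Pos}(\mathcal{Y}_{1\ldots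 j-1}\otimes\mathcal{X}_{1\ldots j})$ for $2\le j\le r$ with $\mathrm{Tr}_{\mathcal{X}_{j+1}}(R_{j+1})=\mathbb{I}_{\mathcal{Y}_j}\otimes R_j$ for $1\le j\le r-1$ and $\sum_{i}P_i=\mathbb{I}_{\mathcal{Y}_r}\otimes R_r$. For an integer $n\ge1$, an $n$-fold strategy (for the prover, "Bob") is an operator $X\in\mathrm{Pos}((\mathcal{Y}_{1\ldots r}\otimes\mathcal{X}_{1\ldots r})^{\otimes n})$ for which there exist $X_j\in\mathrm{Pos}(\mathcal{Y}_{1\ldots j}^{\otimes n}\otimes\mathcal{X}_{1\ldots j}^{\otimes n})$, $1\le j\le r$, with $X_r=X$, $\mathrm{Tr}_{\mathcal{Y}_1^{\otimes n}}(X_1)=\mathbb{I}_{\mathcal{X}_1^{\otimes n}}$ and $\mathrm{Tr}_{\mathcal{Y}_j^{\otimes n}}(X_j)=X_{j-1}\otimes\mathbb{I}_{\mathcal{X}_j^{\otimes n}}$ for $2\le j\le r$. (These model $n$ independent parallel copies of an $r$-round quantum interaction; the probability of outcomes $(i_1,\dots,i_n)$ under strategy $X$ is $\langle P_{i_1}\otimes\cdots\otimes P_{i_n},X\rangle$.) *)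

theory Defs
  imports Complex_Main "HOL-Library.FuncSet"
begin

text \<open>Tensor factors carry labels of type 'l; a dimension function d assigns each
  label its dimension. The standard basis of the tensor product of the factors
  in a finite label set S is indexed by functions f with f l < d l on S and
  f l = 0 off S. Operators are matrices indexed by such basis elements.
  Because factors are labelled, tensor products in different orders are
  automatically identified.\<close>

type_synonym 'l op = "('l \<Rightarrow> nat) \<Rightarrow> ('l \<Rightarrow> nat) \<Rightarrow> complex"

definition basis :: "('l \<Rightarrow> nat) \<Rightarrow> 'l set \<Rightarrow> ('l \<Rightarrow> nat) set" where
  "basis d S = {f. (\<forall>l\<in>S. f l < d l) \<and> (\<forall>l. l \<notin> S \<longrightarrow> f l = 0)}"

definition psd :: "('l \<Rightarrow> nat) \<Rightarrow> 'l set \<Rightarrow> 'l op \<Rightarrow> bool" where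
  "psd d S M = (\<forall>v :: ('l \<Rightarrow> nat) \<Rightarrow> complex.
     let q = (\<Sum>a\<in>basis d S. \<Sum>b\<in>basis d S. cnj (v a) * M a b * v b)
     in Im q = 0 \<and> 0 \<le> Re q)"

definition op_eq :: "('l \<Rightarrow> nat) \<Rightarrow> 'l set \<Rightarrow> 'l op \<Rightarrow> 'l op \<Rightarrow> bool" where
  "op_eq d S M N = (\<forall>a\<in>basis d S. \<forall>b\<in>basis d S. M a b = N a b)"

definition tr :: "('l \<Rightarrow> nat) \<Rightarrow> 'l set \<Rightarrow> 'l op \<Rightarrow> complex" where
  "tr d S M = (\<Sum>a\<in>basis d S. M a a)"

definition inner_op :: "('l \<Rightarrow> nat) \<Rightarrow> 'l set \<Rightarrow> 'l op \<Rightarrow> 'l op \<Rightarrow> complex" where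
  "inner_op d S A B = (\<Sum>a\<in>basis d S. \<Sum>b\<in>basis d S. cnj (A a b) * B a b)"

definition join :: "'l set \<Rightarrow> ('l \<Rightarrow> nat) \<Rightarrow> ('l \<Rightarrow> nat) \<Rightarrow> ('l \<Rightarrow> nat)" where
  "join T a c = (\<lambda>l. if l \<in> T then c l else a l)"

definition zero_on :: "'l set \<Rightarrow> ('l \<Rightarrow> nat) \<Rightarrow> ('l \<Rightarrow> nat)" where
  "zero_on T a = (\<lambda>l. if l \<in> T then 0 else a l)"

definition ptrace :: "('l \<Rightarrow> nat) \<Rightarrow> 'l set \<Rightarrow> 'l op \<Rightarrow> 'l op" where
  "ptrace d T M = (\<lambda>a b. \<Sum>c\<in>basis d T. M (join T a c) (join T b c))"

definition idop :: "'l set \<Rightarrow> 'l op" where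
  "idop T = (\<lambda>a b. if (\<forall>l\<in>T. a l = b l) then 1 else 0)"

definition ident_tensor :: "'l set \<Rightarrow> 'l op \<Rightarrow> 'l op" where
  "ident_tensor T M = (\<lambda>a b. idop T a b * M (zero_on T a) (zero_on T b))"

text \<open>Concrete labels for the interaction: (copy k, round j, isAnswer).
  Label (k,j,False) is the k-th copy of X_j, (k,j,True) the k-th copy of Y_j.\<close>
type_synonym lab = "nat \<times> nat \<times> bool"

definition dimf :: "(nat \<Rightarrow> nat) \<Rightarrow> (nat \<Rightarrow> nat) \<Rightarrow> lab \<Rightarrow> nat" where
  "dimf dx dy = (\<lambda>(k, j, b). if b then dy j else dx j)"

definition Lab :: "nat \<Rightarrow> nat \<Rightarrow> lab set" where
  "Lab n j = {(k, j', b). k < n \<and> 1 \<le> j' \<and> j' \<le> j}"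

definition Ylab :: "nat \<Rightarrow> nat \<Rightarrow> lab set" where
  "Ylab n j = {(k, j', b). k < n \<and> j' = j \<and> b}"

definition Xlab :: "nat \<Rightarrow> nat \<Rightarrow> lab set" where
  "Xlab n j = {(k, j', b). k < n \<and> j' = j \<and> \<not> b}"

text \<open>Y_{1..j-1} (x) X_{1..j} (single copy)\<close>
definition RL :: "nat \<Rightarrow> lab set" where
  "RL j = {(k, j', b). k = 0 \<and> 1 \<le> j' \<and> (if b then j' < j else j' \<le> j)}"

definition verifier :: "(lab \<Rightarrow> nat) \<Rightarrow> nat \<Rightarrow> nat \<Rightarrow> (nat \<Rightarrow> lab op) \<Rightarrow> bool" where
  "verifier d r t P =
    ((\<forall>i<t. psd d (Lab 1 r) (P i)) \<and>
     (\<exists>R :: nat \<Rightarrow> lab op.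
        psd d (Xlab 1 1) (R 1) \<and> tr d (Xlab 1 1) (R 1) = 1 \<and>
        (\<forall>j\<in>{2..r}. psd d (RL j) (R j)) \<and>
        (\<forall>j\<in>{1..r-1}. op_eq d (RL j \<union> Ylab 1 j)
            (ptrace d (Xlab 1 (j+1)) (R (j+1))) (ident_tensor (Ylab 1 j) (R j))) \<and>
        op_eq d (Lab 1 r) (\<lambda>a b. \<Sum>i<t. P i a b) (ident_tensor (Ylab 1 r) (R r))))"

definition strategy :: "(lab \<Rightarrow> nat) \<Rightarrow> nat \<Rightarrow> nat \<Rightarrow> lab op \<Rightarrow> bool" where
  "strategy d r n X =
    (psd d (Lab n r) X \<and>
     (\<exists>Xs :: nat \<Rightarrow> lab op.
        (\<forall>j\<in>{1..r}. psd d (Lab n j) (Xs j)) \<and>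
        op_eq d (Lab n r) (Xs r) X \<and>
        op_eq d (Xlab n 1) (ptrace d (Ylab n 1) (Xs 1)) (idop (Xlab n 1)) \<and>
        (\<forall>j\<in>{2..r}. op_eq d (Lab n j - Ylab n j)
            (ptrace d (Ylab n j) (Xs j)) (ident_tensor (Xlab n j) (Xs (j-1))))))"

definition loc :: "nat \<Rightarrow> (lab \<Rightarrow> nat) \<Rightarrow> (lab \<Rightarrow> nat)" where
  "loc k a = (\<lambda>(c, j, b). if c = 0 then a (k, j, b) else 0)"

definition tensor_copies :: "nat \<Rightarrow> (nat \<Rightarrow> lab op) \<Rightarrow> lab op" where
  "tensor_copies n Q = (\<lambda>a b. \<Prod>k<n. Q k (loc k a) (loc k b))"

end

theory Submission
  imports Defs
begin

text \<open>A product strategy \<open>Y\<^sup>\<otimes>\<^sup>n\<close> earns the single-copy value in every copy, so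
  \<open>v' \<ge> v\<close>. For \<open>v' \<le> v\<close>, view the verifier as a co-strategy: the operators \<open>P\<^sub>i\<close> sum
  to \<open>I \<otimes> R\<^sub>r\<close>, and \<open>R\<close> is a strategy with the roles of questions and answers exchanged.
  Contracting an \<open>(n+1)\<close>-fold strategy with this co-strategy on the last copy gives an
  \<open>n\<close>-fold strategy, contracting it on the first \<open>n\<close> copies gives a 1-fold strategy, and
  the total payoff of the \<open>n+1\<close> copies is the sum of the total payoffs of the two.
  Induction on \<open>n\<close> bounds the average payoff by the best single-copy value. Both directions
  rest on the fact that a strategy and a co-strategy have inner product 1; positivity
  of contractions is reduced to rank-one operators via Gram decompositions.\<close>

section \<open>Basis indices and positive semidefinite matrices\<close>

definition restr :: "'l set \<Rightarrow> ('l \<Rightarrow> nat) \<Rightarrow> ('l \<Rightarrow> nat)" where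
  "restr S a = (\<lambda>l. if l \<in> S then a l else 0)"

lemma finite_basis: "finite S \<Longrightarrow> finite (basis d S)"
proof -
  assume S: "finite S"
  have "basis d S \<subseteq> {f. \<forall>x. (x \<in> S \<longrightarrow> f x \<in> insert 0 (\<Union>l\<in>S. {..<d l})) \<and> (x \<notin> S \<longrightarrow> f x = 0)}"
    unfolding basis_def by auto
  moreover have "finite \<dots>" using S by (intro finite_set_of_finite_funs) auto
  ultimately show ?thesis by (rule finite_subset)
qed

lemma join_in_basis: "S \<inter> T = {} \<Longrightarrow> a \<in> basis d S \<Longrightarrow> c \<in> basis d T \<Longrightarrow> join T a c \<in> basis d (S \<union> T)"
  by (auto simp: basis_def join_def)

lemma restr_join_left: "a \<in> basis d S \<Longrightarrow> S \<inter> T = {} \<Longrightarrow> restr S (join T a c) = a"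
  by (auto simp: basis_def join_def restr_def fun_eq_iff)

lemma restr_join_right: "c \<in> basis d T \<Longrightarrow> restr T (join T a c) = c"
  by (auto simp: basis_def join_def restr_def fun_eq_iff)

lemma join_restr_restr: "x \<in> basis d (S \<union> T) \<Longrightarrow> join T (restr S x) (restr T x) = x"
  by (auto simp: basis_def join_def restr_def fun_eq_iff)

lemma restr_in_basis: "x \<in> basis d (S \<union> T) \<Longrightarrow> restr S x \<in> basis d S"
  by (auto simp: basis_def restr_def)

lemma sum_basis_Un:
  assumes "finite S" "finite T" "S \<inter> T = {}"
  shows "(\<Sum>x\<in>basis d (S \<union> T). f x) = (\<Sum>a\<in>basis d S. \<Sum>c\<in>basis d T. f (join T a c))"
proof -
  have bij: "bij_betw (\<lambda>(a,c). join T a c) (basis d S \<times> basis d T) (basis d (S \<union> T))"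
    apply (rule bij_betw_byWitness[where f'="\<lambda>x. (restr S x, restr T x)"])
    using assms by (auto simp: restr_join_left restr_join_right join_restr_restr join_in_basis restr_in_basis
        intro: restr_in_basis[of _ d T S, simplified Un_commute])
  have "(\<Sum>a\<in>basis d S. \<Sum>c\<in>basis d T. f (join T a c)) = (\<Sum>(a,c)\<in>basis d S \<times> basis d T. f (join T a c))"
    by (rule sum.cartesian_product)
  also have "\<dots> = (\<Sum>x\<in>basis d (S \<union> T). f x)"
    using sum.reindex_bij_betw[OF bij, of f] by (simp add: case_prod_unfold)
  finally show ?thesis by simp
qed

definition nonneg :: "complex \<Rightarrow> bool" where
  "nonneg z \<longleftrightarrow> Im z = 0 \<and> 0 \<le> Re z"

definition quad_form :: "'a set \<Rightarrow> ('a \<Rightarrow> 'a \<Rightarrow> complex) \<Rightarrow> ('a \<Rightarrow> complex) \<Rightarrow> complex" where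
  "quad_form I M v = (\<Sum>a\<in>I. \<Sum>b\<in>I. cnj (v a) * M a b * v b)"

definition psd_on :: "'a set \<Rightarrow> ('a \<Rightarrow> 'a \<Rightarrow> complex) \<Rightarrow> bool" where
  "psd_on I M \<longleftrightarrow> (\<forall>v. nonneg (quad_form I M v))"

lemma psd_iff_psd_on: "psd d S M \<longleftrightarrow> psd_on (basis d S) M"
  by (simp add: psd_def psd_on_def quad_form_def nonneg_def Let_def)

lemma nonneg_sum: "(\<And>x. x \<in> A \<Longrightarrow> nonneg (f x)) \<Longrightarrow> nonneg (sum f A)"
  by (auto simp: nonneg_def Im_sum Re_sum intro: sum_nonneg)

lemma nonneg_cnj_mult: "nonneg (cnj z * z)"
  by (simp add: nonneg_def)

lemma quad_form_supported:
  assumes "finite I" "K \<subseteq> I" "\<And>x. x \<notin> K \<Longrightarrow> v x = 0"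
  shows "quad_form I M v = quad_form K M v"
proof -
  have "quad_form I M v = (\<Sum>a\<in>I. \<Sum>b\<in>K. cnj (v a) * M a b * v b)"
    unfolding quad_form_def by (intro sum.cong refl sum.mono_neutral_right) (use assms in auto)
  also have "\<dots> = quad_form K M v"
    unfolding quad_form_def by (intro sum.mono_neutral_right) (use assms in auto)
  finally show ?thesis .
qed

lemma psd_on_subset:
  assumes "finite J" "I \<subseteq> J" "psd_on J M" shows "psd_on I M"
  unfolding psd_on_def
proof
  fix v
  have "quad_form J M (\<lambda>a. if a \<in> I then v a else 0) = quad_form I M (\<lambda>a. if a \<in> I then v a else 0)"
    by (rule quad_form_supported) (use assms in auto)
  also have "\<dots> = quad_form I M v" by (simp add: quad_form_def)
  finally show "nonneg (quad_form I M v)" using assms(3) unfolding psd_on_def by metis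
qed

lemma quad_form_two_points:
  assumes "finite I" "a \<in> I" "b \<in> I" "a \<noteq> b"
  shows "quad_form I M (\<lambda>z. if z = a then s else if z = b then t else 0)
       = cnj s * M a a * s + cnj s * M a b * t + cnj t * M b a * s + cnj t * M b b * t"
proof -
  have "quad_form I M (\<lambda>z. if z = a then s else if z = b then t else 0)
      = quad_form {a,b} M (\<lambda>z. if z = a then s else if z = b then t else 0)"
    by (rule quad_form_supported) (use assms in auto)
  then show ?thesis using assms by (simp add: quad_form_def algebra_simps)
qed

lemma quad_form_point:
  assumes "finite I" "a \<in> I"
  shows "quad_form I M (\<lambda>z. if z = a then 1 else 0) = M a a"
proof -
  have "quad_form I M (\<lambda>z. if z = a then 1 else 0) = quad_form {a} M (\<lambda>z. if z = a then 1 else 0)"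
    by (rule quad_form_supported) (use assms in auto)
  then show ?thesis by (simp add: quad_form_def)
qed

lemma psd_on_diag: "finite I \<Longrightarrow> psd_on I M \<Longrightarrow> a \<in> I \<Longrightarrow> nonneg (M a a)"
  using quad_form_point[of I a M] unfolding psd_on_def by metis

lemma psd_on_hermitian:
  assumes "finite I" "psd_on I M" "a \<in> I" "b \<in> I"
  shows "M a b = cnj (M b a)"
proof (cases "a = b")
  case True
  then show ?thesis using psd_on_diag[OF assms(1,2,3)] by (simp add: nonneg_def complex_eq_iff)
next
  case False
  have 1: "nonneg (quad_form I M (\<lambda>z. if z = a then 1 else if z = b then 1 else 0))"
    using assms unfolding psd_on_def by blast
  have 2: "nonneg (quad_form I M (\<lambda>z. if z = a then 1 else if z = b then \<i> else 0))"
    using assms unfolding psd_on_def by blast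
  have da: "Im (M a a) = 0" and db: "Im (M b b) = 0"
    using psd_on_diag[OF assms(1,2)] assms(3,4) by (auto simp: nonneg_def)
  from 1 have "Im (M a b) + Im (M b a) = 0"
    by (simp add: quad_form_two_points[OF assms(1,3,4) False] nonneg_def da db)
  moreover from 2 have "Re (M a b) - Re (M b a) = 0"
    by (simp add: quad_form_two_points[OF assms(1,3,4) False] nonneg_def da db)
  ultimately show ?thesis by (simp add: complex_eq_iff)
qed

lemma psd_on_zero_diag_row:
  assumes "finite I" "psd_on I M" "a \<in> I" "b \<in> I" "M a a = 0"
  shows "M a b = 0"
proof (rule ccontr)
  assume m: "M a b \<noteq> 0"
  then have ab: "a \<noteq> b" using assms by auto
  define m where "m = M a b"
  have h: "M b a = cnj m" using psd_on_hermitian[OF assms(1,2,4,3)] m_def by simp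
  have db: "Im (M b b) = 0" using psd_on_diag[OF assms(1,2,4)] by (simp add: nonneg_def)
  define n2 where "n2 = (cmod m)^2"
  have n2: "n2 > 0" using m m_def n2_def by simp
  define t where "t = (Re (M b b) + 1) / (2 * n2)"
  define s where "s = - complex_of_real t * m"
  have "nonneg (quad_form I M (\<lambda>z. if z = a then s else if z = b then 1 else 0))"
    using assms unfolding psd_on_def by blast
  then have "0 \<le> Re (cnj s * m + cnj m * s + M b b)"
    by (simp add: quad_form_two_points[OF assms(1,3,4) ab] assms(5) h m_def[symmetric] nonneg_def)
  also have "cnj s * m + cnj m * s = - complex_of_real (2 * t * n2)"
    unfolding s_def n2_def using complex_norm_square[of m] by (simp add: algebra_simps)
  also have "2 * t * n2 = Re (M b b) + 1" using n2 unfolding t_def by simp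
  finally show False by simp
qed

lemma sum_if_const: "(\<Sum>b\<in>B. if P then f b else 0) = (if P then (\<Sum>b\<in>B. f b) else 0)"
  by simp

lemma quad_form_add_point:
  assumes "finite J" "x \<in> J"
  shows "quad_form J M (\<lambda>a. v a + (if a = x then \<tau> else 0)) = quad_form J M v
     + \<tau> * (\<Sum>a\<in>J. cnj (v a) * M a x) + cnj \<tau> * (\<Sum>b\<in>J. M x b * v b) + cnj \<tau> * M x x * \<tau>"
proof -
  have pt: "\<And>a b. cnj (v a + (if a = x then \<tau> else 0)) * M a b * (v b + (if b = x then \<tau> else 0))
     = cnj (v a) * M a b * v b + (if b = x then cnj (v a) * M a b * \<tau> else 0)
       + ((if a = x then cnj \<tau> * M a b * v b else 0) + (if a = x then (if b = x then cnj \<tau> * M a b * \<tau> else 0) else 0))"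
    by (auto simp: algebra_simps)
  show ?thesis
    unfolding quad_form_def pt
    using assms by (simp add: sum.distrib sum_distrib_left sum_if_const ac_simps)
qed

lemma quad_form_diff_rank1:
  "quad_form J (\<lambda>a b. M a b - u a * cnj (u b)) v = quad_form J M v - (\<Sum>a\<in>J. cnj (v a) * u a) * (\<Sum>b\<in>J. cnj (u b) * v b)"
proof -
  have "quad_form J (\<lambda>a b. M a b - u a * cnj (u b)) v = quad_form J M v - (\<Sum>a\<in>J. \<Sum>b\<in>J. (cnj (v a) * u a) * (cnj (u b) * v b))"
    unfolding quad_form_def by (simp add: algebra_simps sum_subtractf)
  also have "(\<Sum>a\<in>J. \<Sum>b\<in>J. (cnj (v a) * u a) * (cnj (u b) * v b)) = (\<Sum>a\<in>J. cnj (v a) * u a) * (\<Sum>b\<in>J. cnj (u b) * v b)"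
    by (simp add: sum_product)
  finally show ?thesis .
qed

lemma psd_on_Schur_complement:
  assumes fJ: "finite J" and M: "psd_on J M" and x: "x \<in> J" and pos: "Re (M x x) > 0"
  defines "u \<equiv> \<lambda>a. M a x / complex_of_real (sqrt (Re (M x x)))"
  shows "psd_on J (\<lambda>a b. M a b - u a * cnj (u b))" and "M x x - u x * cnj (u x) = 0"
proof -
  define \<alpha> where "\<alpha> = Re (M x x)"
  define sa where "sa = complex_of_real (sqrt \<alpha>)"
  have Mxx: "M x x = complex_of_real \<alpha>"
    using psd_on_diag[OF fJ M x] unfolding \<alpha>_def nonneg_def by (simp add: complex_eq_iff)
  have sa2: "sa * sa = complex_of_real \<alpha>" and csa: "cnj sa = sa" and a0: "complex_of_real \<alpha> \<noteq> 0"
    using pos unfolding sa_def \<alpha>_def of_real_mult[symmetric] by simp_all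
  have u: "u a = M a x / sa" for a unfolding u_def sa_def \<alpha>_def ..
  have herm: "M a b = cnj (M b a)" if "a \<in> J" "b \<in> J" for a b
    using psd_on_hermitian[OF fJ M that] .
  show "psd_on J (\<lambda>a b. M a b - u a * cnj (u b))"
    unfolding psd_on_def
  proof
    fix v
    define s where "s = (\<Sum>b\<in>J. M x b * v b)"
    define \<tau> where "\<tau> = - s / complex_of_real \<alpha>"
    have c1: "(\<Sum>a\<in>J. cnj (v a) * M a x) = cnj s"
      unfolding s_def by (simp add: herm[OF _ x] mult.commute)
    have c2: "(\<Sum>a\<in>J. cnj (v a) * u a) = cnj s / sa"
      using c1 by (simp add: u sum_divide_distrib[symmetric])
    have c3: "(\<Sum>b\<in>J. cnj (u b) * v b) = s / sa"
      unfolding s_def u using csa by (simp add: herm[OF x] sum_divide_distrib[symmetric] mult.commute)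
    have "quad_form J (\<lambda>a b. M a b - u a * cnj (u b)) v = quad_form J M v - cnj s * s / complex_of_real \<alpha>"
      unfolding quad_form_diff_rank1 c2 c3 by (simp add: sa2[symmetric])
    also have "\<dots> = quad_form J M (\<lambda>a. v a + (if a = x then \<tau> else 0))"
      unfolding quad_form_add_point[OF fJ x] c1 Mxx s_def[symmetric] \<tau>_def using a0
      by (simp add: field_simps)
    finally show "nonneg (quad_form J (\<lambda>a b. M a b - u a * cnj (u b)) v)"
      using M unfolding psd_on_def by simp
  qed
  show "M x x - u x * cnj (u x) = 0"
    unfolding u Mxx using csa a0 by (simp add: sa2[symmetric] field_simps)
qed

lemma gram_extend_zero_diag:
  assumes fJ: "finite (insert x I)" and M: "psd_on (insert x I) M" and z: "M x x = 0"
    and w: "\<forall>a\<in>I. \<forall>b\<in>I. M a b = (\<Sum>m<N. w m a * cnj (w m b))"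
  shows "\<forall>a\<in>insert x I. \<forall>b\<in>insert x I.
           M a b = (\<Sum>m<N. (if a = x then 0 else w m a) * cnj (if b = x then 0 else w m b))"
proof (intro ballI)
  fix a b assume ab: "a \<in> insert x I" "b \<in> insert x I"
  have row: "M x c = 0" if "c \<in> insert x I" for c using psd_on_zero_diag_row[OF fJ M _ that z] by simp
  have col: "M c x = 0" if "c \<in> insert x I" for c using psd_on_hermitian[OF fJ M that, of x] row[of c] that by simp
  show "M a b = (\<Sum>m<N. (if a = x then 0 else w m a) * cnj (if b = x then 0 else w m b))"
    using ab row col w by (cases "a = x \<or> b = x") auto
qed

text \<open>Induction on the index set: a Schur complement removes one row at a time.\<close>
lemma psd_on_gram:
  assumes "finite I" "psd_on I M"
  shows "\<exists>N w. \<forall>a\<in>I. \<forall>b\<in>I. M a b = (\<Sum>m<(N::nat). w m a * cnj (w m b))"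
  using assms
proof (induction I arbitrary: M rule: finite_induct)
  case empty
  then show ?case by auto
next
  case (insert x I)
  let ?J = "insert x I"
  have fJ: "finite ?J" using insert by simp
  have gram_zero: "\<exists>N w. \<forall>a\<in>?J. \<forall>b\<in>?J. M' a b = (\<Sum>m<(N::nat). w m a * cnj (w m b))"
    if M': "psd_on ?J M'" and z: "M' x x = 0" for M'
  proof -
    obtain N w where "\<forall>a\<in>I. \<forall>b\<in>I. M' a b = (\<Sum>m<(N::nat). w m a * cnj (w m b))"
      using insert.IH[OF psd_on_subset[OF fJ _ M']] by blast
    from gram_extend_zero_diag[OF fJ M' z this]
    show ?thesis by (intro exI[of _ N] exI[of _ "\<lambda>m a. if a = x then 0 else w m a"]) simp
  qed
  show ?case
  proof (cases "Re (M x x) = 0")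
    case True
    then have "M x x = 0" using psd_on_diag[OF fJ insert.prems] by (simp add: nonneg_def complex_eq_iff)
    then show ?thesis using gram_zero[OF insert.prems] by blast
  next
    case False
    moreover have "nonneg (M x x)" using psd_on_diag[OF fJ insert.prems] by simp
    ultimately have pos: "Re (M x x) > 0" by (simp add: nonneg_def)
    define u where "u a = M a x / complex_of_real (sqrt (Re (M x x)))" for a
    obtain N w where w: "\<forall>a\<in>?J. \<forall>b\<in>?J. M a b - u a * cnj (u b) = (\<Sum>m<(N::nat). w m a * cnj (w m b))"
      using gram_zero[OF psd_on_Schur_complement[OF fJ insert.prems insertI1 pos, folded u_def]] by blast
    have "M a b = (\<Sum>m<Suc N. (w(N := u)) m a * cnj ((w(N := u)) m b))" if "a \<in> ?J" "b \<in> ?J" for a b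
      using w that by (auto simp: algebra_simps)
    then show ?thesis by blast
  qed
qed

section \<open>Contraction, tensor products and partial traces\<close>

text \<open>\<open>contract d S Q X\<close> pairs the factors of \<open>X\<close> in \<open>S\<close> with \<open>Q\<close> as in \<open>\<langle>Q \<otimes> I, X\<rangle>\<close>,
  leaving an operator on the other factors; for \<open>Q = I\<close> it is the partial trace.\<close>
definition contract :: "('l \<Rightarrow> nat) \<Rightarrow> 'l set \<Rightarrow> 'l op \<Rightarrow> 'l op \<Rightarrow> 'l op" where
  "contract d S Q X = (\<lambda>a b. \<Sum>c\<in>basis d S. \<Sum>e\<in>basis d S. cnj (Q c e) * X (join S a c) (join S b e))"

definition tensor_op :: "'l set \<Rightarrow> 'l op \<Rightarrow> 'l op \<Rightarrow> 'l op" where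
  "tensor_op U A B = (\<lambda>a b. A (restr U a) (restr U b) * B (restr (-U) a) (restr (-U) b))"

lemma sum_swap_inner: "(\<Sum>a\<in>A. \<Sum>c\<in>C. \<Sum>b\<in>B. f a c b) = (\<Sum>a\<in>A. \<Sum>b\<in>B. \<Sum>c\<in>C. f a c b)"
  by (rule sum.cong[OF refl], rule sum.swap)

lemma sum_swap_outer3: "(\<Sum>a\<in>A. \<Sum>b\<in>B. \<Sum>m\<in>M. f a b m) = (\<Sum>m\<in>M. \<Sum>a\<in>A. \<Sum>b\<in>B. f a b m)"
proof -
  have "(\<Sum>a\<in>A. \<Sum>b\<in>B. \<Sum>m\<in>M. f a b m) = (\<Sum>a\<in>A. \<Sum>m\<in>M. \<Sum>b\<in>B. f a b m)"
    by (rule sum.cong[OF refl], rule sum.swap)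
  also have "\<dots> = (\<Sum>m\<in>M. \<Sum>a\<in>A. \<Sum>b\<in>B. f a b m)" by (rule sum.swap)
  finally show ?thesis .
qed

lemma psd_on_cong: "(\<And>a b. a \<in> I \<Longrightarrow> b \<in> I \<Longrightarrow> M a b = M' a b) \<Longrightarrow> psd_on I M \<longleftrightarrow> psd_on I M'"
  unfolding psd_on_def quad_form_def by (simp cong: sum.cong)

lemma quad_form_sum: "quad_form I (\<lambda>a b. \<Sum>m\<in>K. F m a b) v = (\<Sum>m\<in>K. quad_form I (F m) v)"
proof -
  have "quad_form I (\<lambda>a b. \<Sum>m\<in>K. F m a b) v = (\<Sum>a\<in>I. \<Sum>b\<in>I. \<Sum>m\<in>K. cnj (v a) * F m a b * v b)"
    unfolding quad_form_def by (simp add: sum_distrib_left sum_distrib_right)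
  also have "\<dots> = (\<Sum>m\<in>K. quad_form I (F m) v)" unfolding quad_form_def by (rule sum_swap_outer3)
  finally show ?thesis .
qed

lemma psd_on_sum: "(\<And>m. m \<in> K \<Longrightarrow> psd_on I (F m)) \<Longrightarrow> psd_on I (\<lambda>a b. \<Sum>m\<in>K. F m a b)"
  unfolding psd_on_def quad_form_sum by (auto intro: nonneg_sum)

lemma psd_on_linear_image:
  assumes "finite I" "psd_on I M"
    and "\<And>w. psd_on J (P (\<lambda>c e. w c * cnj (w e)))"
    and "\<And>Q Q'. (\<And>c e. c \<in> I \<Longrightarrow> e \<in> I \<Longrightarrow> Q c e = Q' c e) \<Longrightarrow> (\<forall>a\<in>J. \<forall>b\<in>J. P Q a b = P Q' a b)"
    and "\<And>F (K::nat set). finite K \<Longrightarrow> \<forall>a b. P (\<lambda>c e. \<Sum>m\<in>K. F m c e) a b = (\<Sum>m\<in>K. P (F m) a b)"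
  shows "psd_on J (P M)"
proof -
  obtain N w where w: "\<forall>a\<in>I. \<forall>b\<in>I. M a b = (\<Sum>m<(N::nat). w m a * cnj (w m b))"
    using psd_on_gram[OF assms(1,2)] by blast
  have "\<forall>a\<in>J. \<forall>b\<in>J. P M a b = P (\<lambda>c e. \<Sum>m<N. w m c * cnj (w m e)) a b"
    by (rule assms(4)) (use w in auto)
  moreover have "\<forall>a b. P (\<lambda>c e. \<Sum>m<N. w m c * cnj (w m e)) a b = (\<Sum>m<N. P (\<lambda>c e. w m c * cnj (w m e)) a b)"
    using assms(5)[of "{..<N}" "\<lambda>m c e. w m c * cnj (w m e)"] by simp
  ultimately have "\<forall>a\<in>J. \<forall>b\<in>J. P M a b = (\<lambda>a b. \<Sum>m<N. P (\<lambda>c e. w m c * cnj (w m e)) a b) a b" by auto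
  then have "psd_on J (P M) \<longleftrightarrow> psd_on J (\<lambda>a b. \<Sum>m<N. P (\<lambda>c e. w m c * cnj (w m e)) a b)"
    by (intro psd_on_cong) auto
  then show ?thesis using assms(3) by (simp add: psd_on_sum)
qed

lemma restr_join_inside: "a \<in> basis d S1 \<Longrightarrow> c \<in> basis d S2 \<Longrightarrow> S1 \<subseteq> U \<Longrightarrow> S2 \<inter> U = {} \<Longrightarrow> restr U (join S2 a c) = a"
  by (auto simp: basis_def restr_def join_def fun_eq_iff)

lemma restr_join_outside: "a \<in> basis d S1 \<Longrightarrow> c \<in> basis d S2 \<Longrightarrow> S1 \<subseteq> U \<Longrightarrow> S2 \<inter> U = {} \<Longrightarrow> restr (-U) (join S2 a c) = c"
  by (auto simp: basis_def restr_def join_def fun_eq_iff)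

lemma restr_inside_in_basis: "a \<in> basis d (S1 \<union> S2) \<Longrightarrow> S1 \<subseteq> U \<Longrightarrow> S2 \<inter> U = {} \<Longrightarrow> restr U a \<in> basis d S1"
  by (auto simp: basis_def restr_def)

lemma restr_outside_in_basis: "a \<in> basis d (S1 \<union> S2) \<Longrightarrow> S1 \<subseteq> U \<Longrightarrow> S2 \<inter> U = {} \<Longrightarrow> restr (-U) a \<in> basis d S2"
  by (auto simp: basis_def restr_def)

lemma quad_form_basis_Un:
  assumes "finite S" "finite T" "S \<inter> T = {}"
  shows "quad_form (basis d (S \<union> T)) X z = (\<Sum>a\<in>basis d S. \<Sum>b\<in>basis d S. \<Sum>c\<in>basis d T. \<Sum>e\<in>basis d T.
           cnj (z (join T a c)) * X (join T a c) (join T b e) * z (join T b e))"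
proof -
  have "quad_form (basis d (S \<union> T)) X z = (\<Sum>a\<in>basis d S. \<Sum>c\<in>basis d T. \<Sum>b\<in>basis d S. \<Sum>e\<in>basis d T.
           cnj (z (join T a c)) * X (join T a c) (join T b e) * z (join T b e))"
    unfolding quad_form_def sum_basis_Un[OF assms] ..
  also have "\<dots> = (\<Sum>a\<in>basis d S. \<Sum>b\<in>basis d S. \<Sum>c\<in>basis d T. \<Sum>e\<in>basis d T.
           cnj (z (join T a c)) * X (join T a c) (join T b e) * z (join T b e))"
    by (rule sum_swap_inner)
  finally show ?thesis .
qed

lemma psd_contract:
  assumes f: "finite S1" "finite S2" "S1 \<inter> S2 = {}" and X: "psd d (S1 \<union> S2) X" and Q: "psd d S2 Q"
  shows "psd d S1 (contract d S2 Q X)"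
  unfolding psd_iff_psd_on
proof (rule psd_on_linear_image[where P="\<lambda>Q. contract d S2 Q X"])
  show "finite (basis d S2)" using f by (simp add: finite_basis)
  show "psd_on (basis d S2) Q" using Q by (simp add: psd_iff_psd_on)
  show "\<forall>a\<in>basis d S1. \<forall>b\<in>basis d S1. contract d S2 Q1 X a b = contract d S2 Q2 X a b"
    if "\<And>c e. c \<in> basis d S2 \<Longrightarrow> e \<in> basis d S2 \<Longrightarrow> Q1 c e = Q2 c e" for Q1 Q2
    using that by (simp add: contract_def)
  show "\<forall>a b. contract d S2 (\<lambda>c e. \<Sum>m\<in>K. F m c e) X a b = (\<Sum>m\<in>K. contract d S2 (F m) X a b)" for F and K :: "nat set"
  proof (intro allI)
    fix a b
    have "contract d S2 (\<lambda>c e. \<Sum>m\<in>K. F m c e) X a b = (\<Sum>c\<in>basis d S2. \<Sum>e\<in>basis d S2. \<Sum>m\<in>K. cnj (F m c e) * X (join S2 a c) (join S2 b e))"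
      unfolding contract_def by (simp add: sum_distrib_right)
    also have "\<dots> = (\<Sum>m\<in>K. contract d S2 (F m) X a b)" unfolding contract_def by (rule sum_swap_outer3)
    finally show "contract d S2 (\<lambda>c e. \<Sum>m\<in>K. F m c e) X a b = (\<Sum>m\<in>K. contract d S2 (F m) X a b)" .
  qed
  show "psd_on (basis d S1) (contract d S2 (\<lambda>c e. w c * cnj (w e)) X)" for w
    unfolding psd_on_def
  proof
    fix v
    define z where "z x = v (restr S1 x) * w (restr S2 x)" for x
    have "quad_form (basis d S1) (contract d S2 (\<lambda>c e. w c * cnj (w e)) X) v = quad_form (basis d (S1 \<union> S2)) X z"
      unfolding quad_form_basis_Un[OF f] unfolding quad_form_def contract_def
      by (intro sum.cong refl) (simp add: z_def restr_join_left restr_join_right f sum_distrib_left sum_distrib_right ac_simps)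
    then show "nonneg (quad_form (basis d S1) (contract d S2 (\<lambda>c e. w c * cnj (w e)) X) v)"
      using X unfolding psd_iff_psd_on psd_on_def by simp
  qed
qed

lemma psd_tensor_op:
  assumes f: "finite S1" "finite S2" "S1 \<inter> S2 = {}" and U: "S1 \<subseteq> U" "S2 \<inter> U = {}"
    and A: "psd d S1 A" and B: "psd d S2 B"
  shows "psd d (S1 \<union> S2) (tensor_op U A B)"
  unfolding psd_iff_psd_on
proof (rule psd_on_linear_image[where P="\<lambda>B. tensor_op U A B"])
  show "finite (basis d S2)" using f by (simp add: finite_basis)
  show "psd_on (basis d S2) B" using B by (simp add: psd_iff_psd_on)
  show "\<forall>a\<in>basis d (S1 \<union> S2). \<forall>b\<in>basis d (S1 \<union> S2). tensor_op U A Q1 a b = tensor_op U A Q2 a b"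
    if "\<And>c e. c \<in> basis d S2 \<Longrightarrow> e \<in> basis d S2 \<Longrightarrow> Q1 c e = Q2 c e" for Q1 Q2
    using that U by (auto simp: tensor_op_def restr_outside_in_basis)
  show "\<forall>a b. tensor_op U A (\<lambda>c e. \<Sum>m\<in>K. F m c e) a b = (\<Sum>m\<in>K. tensor_op U A (F m) a b)" for F and K :: "nat set"
    unfolding tensor_op_def by (simp add: sum_distrib_left)
  show "psd_on (basis d (S1 \<union> S2)) (tensor_op U A (\<lambda>c e. w c * cnj (w e)))" for w
    unfolding psd_on_def
  proof
    fix v
    define z where "z a = (\<Sum>e\<in>basis d S2. cnj (w e) * v (join S2 a e))" for a
    have "quad_form (basis d (S1 \<union> S2)) (tensor_op U A (\<lambda>c e. w c * cnj (w e))) v = quad_form (basis d S1) A z"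
      unfolding quad_form_basis_Un[OF f] unfolding quad_form_def z_def
      by (intro sum.cong refl) (simp add: tensor_op_def restr_join_inside restr_join_outside U sum_distrib_left sum_distrib_right ac_simps)
    then show "nonneg (quad_form (basis d (S1 \<union> S2)) (tensor_op U A (\<lambda>c e. w c * cnj (w e))) v)"
      using A unfolding psd_iff_psd_on psd_on_def by simp
  qed
qed

lemma idop_on_basis: "a \<in> basis d T \<Longrightarrow> b \<in> basis d T \<Longrightarrow> idop T a b = (if a = b then 1 else 0)"
  by (auto simp: idop_def basis_def fun_eq_iff)

lemma sum_delta_mult_left: "finite A \<Longrightarrow> x \<in> A \<Longrightarrow> (\<Sum>y\<in>A. (if x = y then 1 else 0) * g y) = (g x :: 'b::comm_ring_1)"
proof -
  assume "finite A" "x \<in> A"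
  have "(\<lambda>y. (if x = y then 1 else 0) * g y) = (\<lambda>y. if x = y then g y else 0)" by auto
  then show ?thesis unfolding \<open>(\<lambda>y. (if x = y then 1 else 0) * g y) = _\<close>
    using \<open>finite A\<close> \<open>x \<in> A\<close> by simp
qed

lemma sum_delta_mult_right: "finite A \<Longrightarrow> x \<in> A \<Longrightarrow> (\<Sum>y\<in>A. g y * (if x = y then 1 else 0)) = (g x :: 'b::comm_ring_1)"
  using sum_delta_mult_left[of A x g] by (simp add: mult.commute)

lemma sum_sum_delta_diag: "finite A \<Longrightarrow> (\<Sum>x\<in>A. \<Sum>y\<in>A. f x y * (if x = y then 1 else 0)) = (\<Sum>x\<in>A. f x x :: 'b::comm_ring_1)"
  by (intro sum.cong refl) (simp add: sum_delta_mult_right)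

lemma idop_join: "idop Y (join Y c y) (join Y e y') = idop Y y y'"
  by (simp add: idop_def join_def)

lemma ptrace_eq_contract_idop: "finite T \<Longrightarrow> ptrace d T X a b = contract d T (idop T) X a b"
  unfolding ptrace_def contract_def
proof (intro sum.cong refl)
  fix c assume T: "finite T" and c: "c \<in> basis d T"
  have "(\<Sum>e\<in>basis d T. cnj (idop T c e) * X (join T a c) (join T b e))
      = (\<Sum>e\<in>basis d T. (if c = e then 1 else 0) * X (join T a c) (join T b e))"
    using c by (intro sum.cong refl) (simp add: idop_on_basis)
  also have "\<dots> = X (join T a c) (join T b c)" using T c by (simp add: finite_basis sum_delta_mult_left)
  finally show "X (join T a c) (join T b c) = (\<Sum>e\<in>basis d T. cnj (idop T c e) * X (join T a c) (join T b e))" by simp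
qed

lemma psd_idop: "finite T \<Longrightarrow> psd d T (idop T)"
  unfolding psd_iff_psd_on psd_on_def quad_form_def
proof
  fix v assume T: "finite T"
  have "(\<Sum>a\<in>basis d T. \<Sum>b\<in>basis d T. cnj (v a) * idop T a b * v b) = (\<Sum>a\<in>basis d T. cnj (v a) * v a)"
    using T by (intro sum.cong refl) (simp add: idop_on_basis finite_basis mult.assoc sum_distrib_left[symmetric] sum_delta_mult_left)
  then show "nonneg (\<Sum>a\<in>basis d T. \<Sum>b\<in>basis d T. cnj (v a) * idop T a b * v b)"
    by (simp add: nonneg_sum nonneg_cnj_mult)
qed

lemma psd_cong: "op_eq d S M M' \<Longrightarrow> psd d S M \<longleftrightarrow> psd d S M'"
  unfolding psd_iff_psd_on op_eq_def by (rule psd_on_cong) auto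

lemma psd_ptrace:
  assumes "finite S" "finite T" "S \<inter> T = {}" "psd d (S \<union> T) X"
  shows "psd d S (ptrace d T X)"
proof -
  have "psd d S (contract d T (idop T) X)" using assms by (intro psd_contract psd_idop) auto
  moreover have "ptrace d T X = contract d T (idop T) X" using assms(2) by (auto simp: fun_eq_iff ptrace_eq_contract_idop)
  ultimately show ?thesis by simp
qed

lemma join_Un_join: "join (T1 \<union> T2) a (join T2 c1 c2) = join T2 (join T1 a c1) c2"
  by (auto simp: join_def fun_eq_iff)

lemma ptrace_ptrace:
  assumes "finite T1" "finite T2" "T1 \<inter> T2 = {}"
  shows "ptrace d T1 (ptrace d T2 X) = ptrace d (T1 \<union> T2) X"
  unfolding ptrace_def fun_eq_iff sum_basis_Un[OF assms] join_Un_join by simp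

lemma join_comm: "T \<inter> M = {} \<Longrightarrow> join M (join T a y) c = join T (join M a c) y"
  by (auto simp: join_def fun_eq_iff)

lemma ptrace_contract:
  assumes "T \<inter> M = {}"
  shows "ptrace d T (contract d M R X) = contract d M R (ptrace d T X)"
proof (intro ext)
  fix a b
  have "ptrace d T (contract d M R X) a b = (\<Sum>y\<in>basis d T. \<Sum>c\<in>basis d M. \<Sum>e\<in>basis d M.
      cnj (R c e) * X (join T (join M a c) y) (join T (join M b e) y))"
    unfolding ptrace_def contract_def join_comm[OF assms] ..
  also have "\<dots> = (\<Sum>c\<in>basis d M. \<Sum>e\<in>basis d M. \<Sum>y\<in>basis d T.
      cnj (R c e) * X (join T (join M a c) y) (join T (join M b e) y))"
    by (rule sum_swap_outer3[symmetric])
  also have "\<dots> = contract d M R (ptrace d T X) a b"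
    unfolding contract_def ptrace_def by (simp add: sum_distrib_left)
  finally show "ptrace d T (contract d M R X) a b = contract d M R (ptrace d T X) a b" .
qed

lemma restr_inside_join_Un: "T1 \<subseteq> U \<Longrightarrow> T2 \<inter> U = {} \<Longrightarrow>
   restr U (join (T1 \<union> T2) a (join T2 c1 c2)) = join T1 (restr U a) c1"
  by (auto simp: join_def restr_def fun_eq_iff)

lemma restr_outside_join_Un: "T1 \<subseteq> U \<Longrightarrow> T2 \<inter> U = {} \<Longrightarrow>
   restr (-U) (join (T1 \<union> T2) a (join T2 c1 c2)) = join T2 (restr (-U) a) c2"
  by (auto simp: join_def restr_def fun_eq_iff)

lemma ptrace_tensor_op:
  assumes "finite T1" "finite T2" "T1 \<inter> T2 = {}" "T1 \<subseteq> U" "T2 \<inter> U = {}"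
  shows "ptrace d (T1 \<union> T2) (tensor_op U A B) = tensor_op U (ptrace d T1 A) (ptrace d T2 B)"
  unfolding ptrace_def tensor_op_def fun_eq_iff sum_basis_Un[OF assms(1-3)]
    restr_inside_join_Un[OF assms(4,5)] restr_outside_join_Un[OF assms(4,5)]
  by (simp add: sum_product)

lemma tensor_op_ident_tensor: "T1 \<subseteq> U \<Longrightarrow> T2 \<inter> U = {} \<Longrightarrow>
  tensor_op U (ident_tensor T1 A) (ident_tensor T2 B) = ident_tensor (T1 \<union> T2) (tensor_op U A B)"
proof -
  assume a: "T1 \<subseteq> U" "T2 \<inter> U = {}"
  have 1: "zero_on T1 (restr U x) = restr U (zero_on (T1 \<union> T2) x)" for x
    using a by (auto simp: zero_on_def restr_def fun_eq_iff)
  have 2: "zero_on T2 (restr (-U) x) = restr (-U) (zero_on (T1 \<union> T2) x)" for x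
    using a by (auto simp: zero_on_def restr_def fun_eq_iff)
  have 3: "idop T1 (restr U x) (restr U y) * idop T2 (restr (-U) x) (restr (-U) y) = idop (T1 \<union> T2) x y" for x y
    using a by (auto simp: idop_def restr_def)
  show ?thesis unfolding tensor_op_def ident_tensor_def fun_eq_iff 1 2 3[symmetric] by simp
qed

lemma tensor_op_idop: "T1 \<subseteq> U \<Longrightarrow> T2 \<inter> U = {} \<Longrightarrow> tensor_op U (idop T1) (idop T2) = idop (T1 \<union> T2)"
  by (auto simp: tensor_op_def idop_def restr_def fun_eq_iff)

lemma op_eq_tensor_op:
  assumes "S1 \<subseteq> U" "S2 \<inter> U = {}" "op_eq d S1 A A'" "op_eq d S2 B B'"
  shows "op_eq d (S1 \<union> S2) (tensor_op U A B) (tensor_op U A' B')"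
  using assms unfolding op_eq_def tensor_op_def by (simp add: restr_inside_in_basis restr_outside_in_basis)

lemma contract_ident_tensor:
  assumes "finite S" "finite Y" "S \<inter> Y = {}"
  shows "contract d (S \<union> Y) (ident_tensor Y Q) X a b = contract d S Q (ptrace d Y X) a b"
proof -
  have z: "zero_on Y (join Y c y) = c" if "c \<in> basis d S" for c y
    using that assms(3) by (auto simp: zero_on_def join_def basis_def fun_eq_iff)
  have j: "join (S \<union> Y) a (join Y c y) = join Y (join S a c) y" for a c y
    by (auto simp: join_def fun_eq_iff)
  have "contract d (S \<union> Y) (ident_tensor Y Q) X a b = (\<Sum>c\<in>basis d S. \<Sum>y\<in>basis d Y. \<Sum>e\<in>basis d S. \<Sum>y'\<in>basis d Y.
     cnj (Q c e) * X (join Y (join S a c) y) (join Y (join S b e) y') * (if y = y' then 1 else 0))"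
    unfolding contract_def sum_basis_Un[OF assms] ident_tensor_def j
    by (intro sum.cong refl) (auto simp: z idop_on_basis idop_join)
  also have "\<dots> = (\<Sum>c\<in>basis d S. \<Sum>e\<in>basis d S. \<Sum>y\<in>basis d Y. \<Sum>y'\<in>basis d Y.
     cnj (Q c e) * X (join Y (join S a c) y) (join Y (join S b e) y') * (if y = y' then 1 else 0))"
    by (rule sum_swap_inner)
  also have "\<dots> = contract d S Q (ptrace d Y X) a b"
    unfolding contract_def ptrace_def using assms(2)
    by (simp add: sum_sum_delta_diag finite_basis sum_distrib_left)
  finally show ?thesis .
qed

section \<open>Strategies on families of registers\<close>

definition upto_round :: "(nat \<Rightarrow> 'l set) \<Rightarrow> (nat \<Rightarrow> 'l set) \<Rightarrow> nat \<Rightarrow> 'l set" where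
  "upto_round Y X j = (\<Union>j'\<in>{1..j}. Y j' \<union> X j')"

definition disjoint_registers :: "nat \<Rightarrow> (nat \<Rightarrow> 'l set) \<Rightarrow> (nat \<Rightarrow> 'l set) \<Rightarrow> bool" where
  "disjoint_registers r Y X \<longleftrightarrow> (\<forall>j\<in>{1..r}. finite (Y j) \<and> finite (X j)) \<and>
     (\<forall>i\<in>{1..r}. \<forall>j\<in>{1..r}. Y i \<inter> X j = {} \<and> (i \<noteq> j \<longrightarrow> Y i \<inter> Y j = {} \<and> X i \<inter> X j = {}))"

text \<open>\<open>strategy\<close> with arbitrary answer registers \<open>Y j\<close> and question registers \<open>X j\<close>.
  With questions as answers and the answers shifted by one round (\<open>shift_round\<close>) it also
  describes the operators \<open>R\<close> of a verifier.\<close>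
definition strategy_on :: "('l \<Rightarrow> nat) \<Rightarrow> nat \<Rightarrow> (nat \<Rightarrow> 'l set) \<Rightarrow> (nat \<Rightarrow> 'l set) \<Rightarrow> (nat \<Rightarrow> 'l op) \<Rightarrow> bool" where
  "strategy_on d r Y X Xs \<longleftrightarrow> (\<forall>j\<in>{1..r}. psd d (upto_round Y X j) (Xs j)) \<and>
     op_eq d (X 1) (ptrace d (Y 1) (Xs 1)) (idop (X 1)) \<and>
     (\<forall>j\<in>{2..r}. op_eq d (upto_round Y X j - Y j) (ptrace d (Y j) (Xs j)) (ident_tensor (X j) (Xs (j-1))))"

definition shift_round :: "(nat \<Rightarrow> 'l set) \<Rightarrow> nat \<Rightarrow> 'l set" where
  "shift_round Y j = (if j = 1 then {} else Y (j - 1))"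

lemma upto_round_0[simp]: "upto_round Y X 0 = {}" by (simp add: upto_round_def)

lemma upto_round_Suc: "upto_round Y X (Suc j) = upto_round Y X j \<union> Y (Suc j) \<union> X (Suc j)"
  unfolding upto_round_def by (subst atLeastAtMostSuc_conv) auto

lemma upto_round_Un: "upto_round (\<lambda>j. Y1 j \<union> Y2 j) (\<lambda>j. X1 j \<union> X2 j) j = upto_round Y1 X1 j \<union> upto_round Y2 X2 j"
  by (auto simp: upto_round_def)

lemma round_subset_upto_round: "j' \<in> {1..j} \<Longrightarrow> Y j' \<union> X j' \<subseteq> upto_round Y X j"
  by (auto simp: upto_round_def)

lemma disjoint_registers_YX: "disjoint_registers r Y X \<Longrightarrow> i \<in> {1..r} \<Longrightarrow> j \<in> {1..r} \<Longrightarrow> Y i \<inter> X j = {}"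
  unfolding disjoint_registers_def by blast
lemma disjoint_registers_YY: "disjoint_registers r Y X \<Longrightarrow> i \<in> {1..r} \<Longrightarrow> j \<in> {1..r} \<Longrightarrow> i \<noteq> j \<Longrightarrow> Y i \<inter> Y j = {}"
  unfolding disjoint_registers_def by blast
lemma disjoint_registers_XX: "disjoint_registers r Y X \<Longrightarrow> i \<in> {1..r} \<Longrightarrow> j \<in> {1..r} \<Longrightarrow> i \<noteq> j \<Longrightarrow> X i \<inter> X j = {}"
  unfolding disjoint_registers_def by blast

lemma finite_upto_round: "disjoint_registers r Y X \<Longrightarrow> j \<le> r \<Longrightarrow> finite (upto_round Y X j)"
  by (auto simp: upto_round_def disjoint_registers_def)

lemma disjoint_registers_finite: "disjoint_registers r Y X \<Longrightarrow> j \<in> {1..r} \<Longrightarrow> finite (Y j) \<and> finite (X j)"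
  by (auto simp: disjoint_registers_def)

lemma disjoint_registers_round:
  assumes "disjoint_registers r Y X" "j \<in> {1..r}"
  shows "upto_round Y X (j - 1) \<inter> Y j = {}" "upto_round Y X (j - 1) \<inter> X j = {}" "Y j \<inter> X j = {}"
proof -
  have h: "\<forall>j'\<in>{1..j-1}. (Y j' \<union> X j') \<inter> Y j = {} \<and> (Y j' \<union> X j') \<inter> X j = {}"
  proof
    fix j' assume j': "j' \<in> {1..j-1}"
    then have "j' \<in> {1..r}" "j' \<noteq> j" using assms(2) by auto
    then show "(Y j' \<union> X j') \<inter> Y j = {} \<and> (Y j' \<union> X j') \<inter> X j = {}"
      using disjoint_registers_YX[OF assms(1), of j' j] disjoint_registers_YX[OF assms(1), of j j'] disjoint_registers_YY[OF assms(1), of j' j] disjoint_registers_XX[OF assms(1), of j' j] assms(2)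
      by blast
  qed
  then show "upto_round Y X (j - 1) \<inter> Y j = {}" "upto_round Y X (j - 1) \<inter> X j = {}" unfolding upto_round_def by blast+
  show "Y j \<inter> X j = {}" using disjoint_registers_YX[OF assms(1) assms(2) assms(2)] .
qed

lemma upto_round_prev: "j \<ge> 1 \<Longrightarrow> upto_round Y X j = upto_round Y X (j - 1) \<union> Y j \<union> X j"
  using upto_round_Suc[of Y X "j - 1"] by simp

lemma upto_round_Diff_answer: "disjoint_registers r Y X \<Longrightarrow> j \<in> {1..r} \<Longrightarrow> upto_round Y X j - Y j = upto_round Y X (j - 1) \<union> X j"
  using upto_round_prev[of j Y X] disjoint_registers_round[of r Y X j] by auto

lemma upto_round_shift: "j \<ge> 1 \<Longrightarrow> upto_round X (shift_round Y) j = upto_round Y X (j - 1) \<union> X j"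
proof (induction j)
  case 0 then show ?case by simp
next
  case (Suc j)
  show ?case
  proof (cases "j = 0")
    case True then show ?thesis by (simp add: upto_round_Suc shift_round_def)
  next
    case False
    then have "upto_round X (shift_round Y) j = upto_round Y X (j - 1) \<union> X j" using Suc by simp
    moreover have "upto_round Y X j = upto_round Y X (j - 1) \<union> Y j \<union> X j" using False by (simp add: upto_round_prev)
    moreover have "shift_round Y (Suc j) = Y j" using False by (simp add: shift_round_def)
    ultimately show ?thesis using False by (simp add: upto_round_Suc) blast
  qed
qed

lemma disjoint_registers_shift: "disjoint_registers r Y X \<Longrightarrow> disjoint_registers r X (shift_round Y)"
proof -
  assume w: "disjoint_registers r Y X"
  have A: "\<forall>j\<in>{1..r}. finite (X j) \<and> finite (shift_round Y j)"
  proof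
    fix j assume j: "j \<in> {1..r}"
    show "finite (X j) \<and> finite (shift_round Y j)"
    proof (cases "j = 1")
      case True then show ?thesis using disjoint_registers_finite[OF w j] by (simp add: shift_round_def)
    next
      case False then have "j - 1 \<in> {1..r}" using j by auto
      then show ?thesis using disjoint_registers_finite[OF w j] disjoint_registers_finite[OF w \<open>j - 1 \<in> {1..r}\<close>] False by (simp add: shift_round_def)
    qed
  qed
  have B: "X i \<inter> shift_round Y j = {} \<and> (i \<noteq> j \<longrightarrow> X i \<inter> X j = {} \<and> shift_round Y i \<inter> shift_round Y j = {})"
    if i: "i \<in> {1..r}" and j: "j \<in> {1..r}" for i j
  proof -
    have 1: "X i \<inter> shift_round Y j = {}"
    proof (cases "j = 1")
      case True then show ?thesis by (simp add: shift_round_def)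
    next
      case False then have "j - 1 \<in> {1..r}" using j by auto
      then show ?thesis using w i False disjoint_registers_YX[OF w, of "j - 1" i] by (simp add: shift_round_def Int_commute)
    qed
    have 2: "X i \<inter> X j = {} \<and> shift_round Y i \<inter> shift_round Y j = {}" if ne: "i \<noteq> j"
    proof -
      have "X i \<inter> X j = {}" using disjoint_registers_XX[OF w i j ne] .
      moreover have "shift_round Y i \<inter> shift_round Y j = {}"
      proof (cases "i = 1 \<or> j = 1")
        case True then show ?thesis by (auto simp: shift_round_def)
      next
        case False then have "i - 1 \<in> {1..r}" "j - 1 \<in> {1..r}" "i - 1 \<noteq> j - 1" using i j ne by auto
        then show ?thesis using False disjoint_registers_YY[OF w, of "i - 1" "j - 1"] by (simp add: shift_round_def)
      qed
      ultimately show ?thesis by simp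
    qed
    show ?thesis using 1 2 by blast
  qed
  show ?thesis unfolding disjoint_registers_def using A B by (simp add: Ball_def)
qed

definition separated_by :: "nat \<Rightarrow> (nat \<Rightarrow> 'l set) \<Rightarrow> (nat \<Rightarrow> 'l set) \<Rightarrow> (nat \<Rightarrow> 'l set) \<Rightarrow> (nat \<Rightarrow> 'l set) \<Rightarrow> 'l set \<Rightarrow> bool" where
  "separated_by r Y1 X1 Y2 X2 U \<longleftrightarrow> (\<forall>j\<in>{1..r}. Y1 j \<union> X1 j \<subseteq> U \<and> (Y2 j \<union> X2 j) \<inter> U = {})"

lemma separated_by_upto_round_left: "separated_by r Y1 X1 Y2 X2 U \<Longrightarrow> j \<le> r \<Longrightarrow> upto_round Y1 X1 j \<subseteq> U"
  unfolding separated_by_def upto_round_def by force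

lemma separated_by_upto_round_right: "separated_by r Y1 X1 Y2 X2 U \<Longrightarrow> j \<le> r \<Longrightarrow> upto_round Y2 X2 j \<inter> U = {}"
  unfolding separated_by_def upto_round_def by force

lemma separated_byD: "separated_by r Y1 X1 Y2 X2 U \<Longrightarrow> j \<in> {1..r} \<Longrightarrow> Y1 j \<subseteq> U \<and> X1 j \<subseteq> U \<and> Y2 j \<inter> U = {} \<and> X2 j \<inter> U = {}"
  unfolding separated_by_def by blast

lemma strategy_on_tensor_op:
  assumes r: "1 \<le> r" and w1: "disjoint_registers r Y1 X1" and w2: "disjoint_registers r Y2 X2" and s: "separated_by r Y1 X1 Y2 X2 U"
    and A: "strategy_on d r Y1 X1 A" and B: "strategy_on d r Y2 X2 B"
  shows "strategy_on d r (\<lambda>j. Y1 j \<union> Y2 j) (\<lambda>j. X1 j \<union> X2 j) (\<lambda>j. tensor_op U (A j) (B j))"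
  unfolding strategy_on_def upto_round_Un
proof (intro conjI ballI)
  fix j assume j: "j \<in> {1..r}"
  show "psd d (upto_round Y1 X1 j \<union> upto_round Y2 X2 j) (tensor_op U (A j) (B j))"
  proof (rule psd_tensor_op)
    show "finite (upto_round Y1 X1 j)" "finite (upto_round Y2 X2 j)" using finite_upto_round[OF w1] finite_upto_round[OF w2] j by auto
    show L1: "upto_round Y1 X1 j \<subseteq> U" and L2: "upto_round Y2 X2 j \<inter> U = {}" using separated_by_upto_round_left[OF s] separated_by_upto_round_right[OF s] j by auto
    show "upto_round Y1 X1 j \<inter> upto_round Y2 X2 j = {}" using L1 L2 by blast
    show "psd d (upto_round Y1 X1 j) (A j)" "psd d (upto_round Y2 X2 j) (B j)" using A B j by (simp_all add: strategy_on_def)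
  qed
next
  have j1: "1 \<in> {1..r}" using r by simp
  note sd = separated_byD[OF s j1]
  have "ptrace d (Y1 1 \<union> Y2 1) (tensor_op U (A 1) (B 1)) = tensor_op U (ptrace d (Y1 1) (A 1)) (ptrace d (Y2 1) (B 1))"
    by (rule ptrace_tensor_op) (use disjoint_registers_finite[OF w1 j1] disjoint_registers_finite[OF w2 j1] sd in blast)+
  moreover have "op_eq d (X1 1 \<union> X2 1) (tensor_op U (ptrace d (Y1 1) (A 1)) (ptrace d (Y2 1) (B 1))) (tensor_op U (idop (X1 1)) (idop (X2 1)))"
    by (rule op_eq_tensor_op) (use sd A B in \<open>simp_all add: strategy_on_def\<close>)
  moreover have "tensor_op U (idop (X1 1)) (idop (X2 1)) = idop (X1 1 \<union> X2 1)" using sd by (simp add: tensor_op_idop)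
  ultimately show "op_eq d (X1 1 \<union> X2 1) (ptrace d (Y1 1 \<union> Y2 1) (tensor_op U (A 1) (B 1))) (idop (X1 1 \<union> X2 1))" by simp
next
  fix j assume j2: "j \<in> {2..r}"
  then have j: "j \<in> {1..r}" by auto
  note sd = separated_byD[OF s j]
  have L1: "upto_round Y1 X1 j \<subseteq> U" and L2: "upto_round Y2 X2 j \<inter> U = {}" using separated_by_upto_round_left[OF s] separated_by_upto_round_right[OF s] j by auto
  have eqS: "upto_round Y1 X1 j \<union> upto_round Y2 X2 j - (Y1 j \<union> Y2 j) = (upto_round Y1 X1 j - Y1 j) \<union> (upto_round Y2 X2 j - Y2 j)"
    using L1 L2 sd by blast
  have "ptrace d (Y1 j \<union> Y2 j) (tensor_op U (A j) (B j)) = tensor_op U (ptrace d (Y1 j) (A j)) (ptrace d (Y2 j) (B j))"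
    by (rule ptrace_tensor_op) (use disjoint_registers_finite[OF w1 j] disjoint_registers_finite[OF w2 j] sd in blast)+
  moreover have "op_eq d ((upto_round Y1 X1 j - Y1 j) \<union> (upto_round Y2 X2 j - Y2 j)) (tensor_op U (ptrace d (Y1 j) (A j)) (ptrace d (Y2 j) (B j)))
     (tensor_op U (ident_tensor (X1 j) (A (j-1))) (ident_tensor (X2 j) (B (j-1))))"
  proof (rule op_eq_tensor_op)
    show "upto_round Y1 X1 j - Y1 j \<subseteq> U" "(upto_round Y2 X2 j - Y2 j) \<inter> U = {}" using L1 L2 by auto
    show "op_eq d (upto_round Y1 X1 j - Y1 j) (ptrace d (Y1 j) (A j)) (ident_tensor (X1 j) (A (j - 1)))"
      using A j2 by (simp add: strategy_on_def)
    show "op_eq d (upto_round Y2 X2 j - Y2 j) (ptrace d (Y2 j) (B j)) (ident_tensor (X2 j) (B (j - 1)))"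
      using B j2 by (simp add: strategy_on_def)
  qed
  moreover have "tensor_op U (ident_tensor (X1 j) (A (j-1))) (ident_tensor (X2 j) (B (j-1)))
      = ident_tensor (X1 j \<union> X2 j) (tensor_op U (A (j-1)) (B (j-1)))"
    using sd by (simp add: tensor_op_ident_tensor)
  ultimately show "op_eq d (upto_round Y1 X1 j \<union> upto_round Y2 X2 j - (Y1 j \<union> Y2 j)) (ptrace d (Y1 j \<union> Y2 j) (tensor_op U (A j) (B j)))
          (ident_tensor (X1 j \<union> X2 j) (tensor_op U (A (j - 1)) (B (j - 1))))" unfolding eqS by simp
qed

lemma contract_cong: "(\<And>c e. c \<in> basis d S \<Longrightarrow> e \<in> basis d S \<Longrightarrow> Q c e = Q' c e) \<Longrightarrow> contract d S Q X a b = contract d S Q' X a b"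
  unfolding contract_def by (intro sum.cong refl) auto

lemma contract_ident_tensor_round:
  assumes fL: "finite L" and fX: "finite X2" and d1: "L \<inter> X2 = {}" and d2: "S \<inter> (L \<union> X2) = {}" and sub: "X1 \<subseteq> S"
    and a: "a \<in> basis d S" and b: "b \<in> basis d S"
  shows "(\<Sum>c\<in>basis d (L \<union> X2). \<Sum>e\<in>basis d (L \<union> X2). cnj (R c e) * ident_tensor (X1 \<union> X2) W (join (L \<union> X2) a c) (join (L \<union> X2) b e))
   = idop X1 a b * contract d L (ptrace d X2 R) W (zero_on X1 a) (zero_on X1 b)"
proof -
  define a' where "a' = zero_on X1 a"
  define b' where "b' = zero_on X1 b"
  have z: "zero_on (X1 \<union> X2) (join (L \<union> X2) p (join X2 c0 x)) = join L (zero_on X1 p) c0" if "p \<in> basis d S" for p c0 x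
    using that d1 d2 sub by (auto simp: zero_on_def join_def basis_def fun_eq_iff)
  have i: "idop (X1 \<union> X2) (join (L \<union> X2) a (join X2 c0 x)) (join (L \<union> X2) b (join X2 e0 x')) = idop X1 a b * idop X2 x x'" for c0 x e0 x'
    using d1 d2 sub by (auto simp: idop_def join_def)
  have "(\<Sum>c\<in>basis d (L \<union> X2). \<Sum>e\<in>basis d (L \<union> X2). cnj (R c e) * ident_tensor (X1 \<union> X2) W (join (L \<union> X2) a c) (join (L \<union> X2) b e))
     = (\<Sum>c0\<in>basis d L. \<Sum>x\<in>basis d X2. \<Sum>e0\<in>basis d L. \<Sum>x'\<in>basis d X2.
          idop X1 a b * (cnj (R (join X2 c0 x) (join X2 e0 x')) * W (join L a' c0) (join L b' e0)) * (if x = x' then 1 else 0))"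
    unfolding sum_basis_Un[OF fL fX d1] ident_tensor_def a'_def b'_def
    by (intro sum.cong refl) (simp add: z[OF a] z[OF b] i idop_on_basis)
  also have "\<dots> = (\<Sum>c0\<in>basis d L. \<Sum>e0\<in>basis d L. \<Sum>x\<in>basis d X2. \<Sum>x'\<in>basis d X2.
          idop X1 a b * (cnj (R (join X2 c0 x) (join X2 e0 x')) * W (join L a' c0) (join L b' e0)) * (if x = x' then 1 else 0))"
    by (rule sum_swap_inner)
  also have "\<dots> = (\<Sum>c0\<in>basis d L. \<Sum>e0\<in>basis d L. \<Sum>x\<in>basis d X2.
          idop X1 a b * (cnj (R (join X2 c0 x) (join X2 e0 x)) * W (join L a' c0) (join L b' e0)))"
    using fX by (intro sum.cong refl) (simp add: sum_delta_mult_right finite_basis)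
  also have "\<dots> = idop X1 a b * contract d L (ptrace d X2 R) W a' b'"
    unfolding contract_def ptrace_def by (simp add: sum_distrib_left sum_distrib_right)
  finally show ?thesis unfolding a'_def b'_def .
qed

lemma basis_empty: "basis d {} = {\<lambda>_. 0}"
  by (auto simp: basis_def)

lemma contract_empty: "contract d {} Q W a b = cnj (Q (\<lambda>_. 0) (\<lambda>_. 0)) * W a b"
  by (simp add: contract_def basis_empty join_def)

lemma ident_tensor_one: "ident_tensor T (\<lambda>_ _. 1) = idop T"
  by (simp add: ident_tensor_def fun_eq_iff)

text \<open>A strategy on the registers of two parties, contracted round by round with a
  co-strategy of the second party, leaves a strategy of the first party.\<close>
locale strategy_contraction =
  fixes d :: "'l \<Rightarrow> nat" and r :: nat and Y1 X1 Y2 X2 :: "nat \<Rightarrow> 'l set" and U :: "'l set"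
    and Xs R :: "nat \<Rightarrow> 'l op"
  assumes r: "1 \<le> r" and w1: "disjoint_registers r Y1 X1" and w2: "disjoint_registers r Y2 X2"
    and s: "separated_by r Y1 X1 Y2 X2 U"
    and Xs: "strategy_on d r (\<lambda>j. Y1 j \<union> Y2 j) (\<lambda>j. X1 j \<union> X2 j) Xs"
    and R: "strategy_on d r X2 (shift_round Y2) R"
begin

definition co_regs :: "nat \<Rightarrow> 'l set" where
  "co_regs j = upto_round Y2 X2 j - Y2 j"

definition contracted :: "nat \<Rightarrow> 'l op" where
  "contracted j = contract d (co_regs j) (R j) (ptrace d (Y2 j) (Xs j))"

lemma co_regs_eq: "j \<in> {1..r} \<Longrightarrow> co_regs j = upto_round Y2 X2 (j - 1) \<union> X2 j"
  unfolding co_regs_def using upto_round_Diff_answer[OF w2] .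

lemma upto_round_costrategy: "j \<in> {1..r} \<Longrightarrow> upto_round X2 (shift_round Y2) j = co_regs j"
  using upto_round_shift[of j X2 Y2] co_regs_eq by simp

lemma co_regs_disjoint: "j \<le> r \<Longrightarrow> co_regs j \<inter> U = {}" "co_regs j \<inter> Y2 j = {}"
  using separated_by_upto_round_right[OF s] unfolding co_regs_def by blast+

lemma finite_co_regs: "j \<le> r \<Longrightarrow> finite (co_regs j)"
  using finite_upto_round[OF w2] unfolding co_regs_def by simp

lemma ptrace_contracted:
  assumes j: "j \<in> {1..r}"
  shows "ptrace d (Y1 j) (contracted j) = contract d (co_regs j) (R j) (ptrace d (Y1 j \<union> Y2 j) (Xs j))"
proof -
  have "Y1 j \<inter> co_regs j = {}" using separated_byD[OF s j] co_regs_disjoint[of j] j by auto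
  then have "ptrace d (Y1 j) (contracted j) = contract d (co_regs j) (R j) (ptrace d (Y1 j) (ptrace d (Y2 j) (Xs j)))"
    unfolding contracted_def by (rule ptrace_contract)
  also have "ptrace d (Y1 j) (ptrace d (Y2 j) (Xs j)) = ptrace d (Y1 j \<union> Y2 j) (Xs j)"
    by (rule ptrace_ptrace)
      (use disjoint_registers_finite[OF w1 j] disjoint_registers_finite[OF w2 j] separated_byD[OF s j] in blast)+
  finally show ?thesis .
qed

lemma psd_contracted:
  assumes j: "j \<in> {1..r}"
  shows "psd d (upto_round Y1 X1 j) (contracted j)"
proof -
  have jr: "j \<le> r" using j by simp
  have L1U: "upto_round Y1 X1 j \<subseteq> U" using separated_by_upto_round_left[OF s jr] .
  have fin: "finite (upto_round Y1 X1 j)" using finite_upto_round[OF w1 jr] .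
  have "(upto_round Y1 X1 j \<union> co_regs j) \<union> Y2 j = upto_round (\<lambda>j. Y1 j \<union> Y2 j) (\<lambda>j. X1 j \<union> X2 j) j"
    unfolding upto_round_Un co_regs_def using round_subset_upto_round[of j j Y2 X2] j by auto
  then have P: "psd d ((upto_round Y1 X1 j \<union> co_regs j) \<union> Y2 j) (Xs j)"
    using Xs j by (simp add: strategy_on_def)
  have P2: "psd d (upto_round Y1 X1 j \<union> co_regs j) (ptrace d (Y2 j) (Xs j))"
  proof (rule psd_ptrace[OF _ _ _ P])
    show "finite (upto_round Y1 X1 j \<union> co_regs j)" using fin finite_co_regs[OF jr] by simp
    show "finite (Y2 j)" using disjoint_registers_finite[OF w2 j] by simp
    show "(upto_round Y1 X1 j \<union> co_regs j) \<inter> Y2 j = {}"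
      using L1U separated_byD[OF s j] co_regs_disjoint(1)[OF jr] co_regs_disjoint(2) by blast
  qed
  have PR: "psd d (co_regs j) (R j)"
    using R j upto_round_costrategy[OF j] unfolding strategy_on_def by metis
  show ?thesis unfolding contracted_def
    by (rule psd_contract[OF _ _ _ P2 PR]) (use fin finite_co_regs[OF jr] L1U co_regs_disjoint(1)[OF jr] co_regs_disjoint(2) in blast)+
qed

lemma contracted_first_round: "op_eq d (X1 1) (ptrace d (Y1 1) (contracted 1)) (idop (X1 1))"
  unfolding op_eq_def
proof (intro ballI)
  fix a b assume a: "a \<in> basis d (X1 1)" and b: "b \<in> basis d (X1 1)"
  have j1: "1 \<in> {1..r}" using r by simp
  have M1: "co_regs 1 = {} \<union> X2 1" using co_regs_eq[OF j1] by simp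
  have dXM: "X1 1 \<inter> co_regs 1 = {}" using separated_byD[OF s j1] co_regs_disjoint(1)[of 1] r by auto
  have XsC: "ptrace d (Y1 1 \<union> Y2 1) (Xs 1) p q = ident_tensor (X1 1 \<union> X2 1) (\<lambda>_ _. 1) p q"
    if "p \<in> basis d (X1 1 \<union> X2 1)" "q \<in> basis d (X1 1 \<union> X2 1)" for p q
    using Xs that unfolding strategy_on_def op_eq_def ident_tensor_one by blast
  have "ptrace d (Y1 1) (contracted 1) a b = (\<Sum>c\<in>basis d ({} \<union> X2 1). \<Sum>e\<in>basis d ({} \<union> X2 1).
       cnj (R 1 c e) * ident_tensor (X1 1 \<union> X2 1) (\<lambda>_ _. 1) (join ({} \<union> X2 1) a c) (join ({} \<union> X2 1) b e))"
    unfolding ptrace_contracted[OF j1] contract_def M1[symmetric]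
  proof (intro sum.cong refl)
    fix c e assume c: "c \<in> basis d (co_regs 1)" and e: "e \<in> basis d (co_regs 1)"
    have "join (co_regs 1) a c \<in> basis d (X1 1 \<union> X2 1)" "join (co_regs 1) b e \<in> basis d (X1 1 \<union> X2 1)"
      using join_in_basis[OF dXM a c] join_in_basis[OF dXM b e] M1 by auto
    then show "cnj (R 1 c e) * ptrace d (Y1 1 \<union> Y2 1) (Xs 1) (join (co_regs 1) a c) (join (co_regs 1) b e) =
      cnj (R 1 c e) * ident_tensor (X1 1 \<union> X2 1) (\<lambda>_ _. 1) (join (co_regs 1) a c) (join (co_regs 1) b e)"
      using XsC by simp
  qed
  also have "\<dots> = idop (X1 1) a b * contract d {} (ptrace d (X2 1) (R 1)) (\<lambda>_ _. 1) (zero_on (X1 1) a) (zero_on (X1 1) b)"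
    by (rule contract_ident_tensor_round)
      (use a b dXM M1 disjoint_registers_finite[OF w2 j1] in auto)
  moreover have "ptrace d (X2 1) (R 1) (\<lambda>_. 0) (\<lambda>_. 0) = 1"
    using R unfolding strategy_on_def op_eq_def by (simp add: shift_round_def basis_empty idop_def)
  ultimately show "ptrace d (Y1 1) (contracted 1) a b = idop (X1 1) a b" by (simp add: contract_empty)
qed

lemma costrategy_later_round:
  assumes j2: "j \<in> {2..r}" and c: "c \<in> basis d (upto_round Y2 X2 (j - 1))" and e: "e \<in> basis d (upto_round Y2 X2 (j - 1))"
  shows "ptrace d (X2 j) (R j) c e = ident_tensor (Y2 (j - 1)) (R (j - 1)) c e"
proof -
  have j: "j \<in> {1..r}" using j2 by auto
  have "upto_round X2 (shift_round Y2) j - X2 j = upto_round Y2 X2 (j - 1)"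
    using upto_round_costrategy[OF j] co_regs_eq[OF j] disjoint_registers_round(2)[OF w2 j] by blast
  moreover have "shift_round Y2 j = Y2 (j - 1)" using j2 by (simp add: shift_round_def)
  ultimately show ?thesis using R j2 c e unfolding strategy_on_def op_eq_def by auto
qed

lemma contract_prev_round:
  assumes j2: "j \<in> {2..r}"
  shows "contract d (upto_round Y2 X2 (j - 1)) (ident_tensor (Y2 (j - 1)) (R (j - 1))) (Xs (j - 1)) a b
       = contracted (j - 1) a b"
proof -
  have jp: "j - 1 \<in> {1..r}" and jr: "j - 1 \<le> r" using j2 by auto
  have e: "upto_round Y2 X2 (j - 1) = co_regs (j - 1) \<union> Y2 (j - 1)"
    unfolding co_regs_def using round_subset_upto_round[of "j - 1" "j - 1" Y2 X2] jp by auto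
  show ?thesis unfolding contracted_def e
    by (rule contract_ident_tensor)
      (use finite_co_regs[OF jr] disjoint_registers_finite[OF w2 jp] co_regs_disjoint(1)[OF jr] co_regs_disjoint(2) in auto)
qed

lemma contracted_later_round:
  assumes j2: "j \<in> {2..r}"
  shows "op_eq d (upto_round Y1 X1 j - Y1 j) (ptrace d (Y1 j) (contracted j)) (ident_tensor (X1 j) (contracted (j - 1)))"
  unfolding op_eq_def
proof (intro ballI)
  define S where "S = upto_round Y1 X1 j - Y1 j"
  define L where "L = upto_round Y2 X2 (j - 1)"
  fix a b assume a: "a \<in> basis d (upto_round Y1 X1 j - Y1 j)" and b: "b \<in> basis d (upto_round Y1 X1 j - Y1 j)"
  have j: "j \<in> {1..r}" and jr: "j \<le> r" using j2 by auto
  have Mj: "co_regs j = L \<union> X2 j" unfolding L_def using co_regs_eq[OF j] .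
  have dSM: "S \<inter> co_regs j = {}"
    using separated_by_upto_round_left[OF s jr] co_regs_disjoint(1)[OF jr] unfolding S_def by blast
  have SMU: "upto_round (\<lambda>j. Y1 j \<union> Y2 j) (\<lambda>j. X1 j \<union> X2 j) j - (Y1 j \<union> Y2 j) = S \<union> co_regs j"
    unfolding upto_round_Un S_def co_regs_def
    using separated_by_upto_round_left[OF s jr] separated_by_upto_round_right[OF s jr] separated_byD[OF s j] by blast
  have XsC: "ptrace d (Y1 j \<union> Y2 j) (Xs j) p q = ident_tensor (X1 j \<union> X2 j) (Xs (j - 1)) p q"
    if "p \<in> basis d (S \<union> co_regs j)" "q \<in> basis d (S \<union> co_regs j)" for p q
  proof -
    have "op_eq d (S \<union> co_regs j) (ptrace d (Y1 j \<union> Y2 j) (Xs j)) (ident_tensor (X1 j \<union> X2 j) (Xs (j - 1)))"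
      using Xs j2 unfolding strategy_on_def SMU[symmetric] by blast
    then show ?thesis using that unfolding op_eq_def by blast
  qed
  have "ptrace d (Y1 j) (contracted j) a b = (\<Sum>c\<in>basis d (L \<union> X2 j). \<Sum>e\<in>basis d (L \<union> X2 j).
       cnj (R j c e) * ident_tensor (X1 j \<union> X2 j) (Xs (j - 1)) (join (L \<union> X2 j) a c) (join (L \<union> X2 j) b e))"
    unfolding ptrace_contracted[OF j] contract_def Mj[symmetric]
    using XsC join_in_basis[OF dSM a[folded S_def]] join_in_basis[OF dSM b[folded S_def]] by (intro sum.cong refl) auto
  also have "\<dots> = idop (X1 j) a b * contract d L (ptrace d (X2 j) (R j)) (Xs (j - 1)) (zero_on (X1 j) a) (zero_on (X1 j) b)"
  proof (rule contract_ident_tensor_round)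
    show "finite L" unfolding L_def using finite_upto_round[OF w2] jr by simp
    show "finite (X2 j)" using disjoint_registers_finite[OF w2 j] by simp
    show "L \<inter> X2 j = {}" unfolding L_def using disjoint_registers_round[OF w2 j] by simp
    show "S \<inter> (L \<union> X2 j) = {}" using dSM Mj by simp
    show "X1 j \<subseteq> S" unfolding S_def using upto_round_Diff_answer[OF w1 j] by simp
  qed (use a b S_def in auto)
  also have "contract d L (ptrace d (X2 j) (R j)) (Xs (j - 1)) (zero_on (X1 j) a) (zero_on (X1 j) b)
      = contract d L (ident_tensor (Y2 (j - 1)) (R (j - 1))) (Xs (j - 1)) (zero_on (X1 j) a) (zero_on (X1 j) b)"
    by (rule contract_cong) (use costrategy_later_round[OF j2] L_def in auto)
  also have "\<dots> = contracted (j - 1) (zero_on (X1 j) a) (zero_on (X1 j) b)"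
    unfolding L_def by (rule contract_prev_round[OF j2])
  finally show "ptrace d (Y1 j) (contracted j) a b = ident_tensor (X1 j) (contracted (j - 1)) a b"
    by (simp add: ident_tensor_def)
qed

lemma strategy_on_contracted: "strategy_on d r Y1 X1 contracted"
  unfolding strategy_on_def
  using psd_contracted contracted_first_round contracted_later_round by blast

end

lemma strategy_on_contract:
  assumes "1 \<le> r" "disjoint_registers r Y1 X1" "disjoint_registers r Y2 X2" "separated_by r Y1 X1 Y2 X2 U"
    and "strategy_on d r (\<lambda>j. Y1 j \<union> Y2 j) (\<lambda>j. X1 j \<union> X2 j) Xs"
    and "strategy_on d r X2 (shift_round Y2) R"
  shows "strategy_on d r Y1 X1 (\<lambda>j. contract d (upto_round Y2 X2 j - Y2 j) (R j) (ptrace d (Y2 j) (Xs j)))"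
proof -
  interpret strategy_contraction d r Y1 X1 Y2 X2 U Xs R
    using assms by unfold_locales
  show ?thesis using strategy_on_contracted unfolding contracted_def co_regs_def .
qed

section \<open>Relabelling by an involution\<close>

definition relab :: "('l \<Rightarrow> 'l) \<Rightarrow> 'l op \<Rightarrow> 'l op" where
  "relab \<phi> M = (\<lambda>a b. M (a \<circ> \<phi>) (b \<circ> \<phi>))"

locale label_involution =
  fixes \<phi> :: "'l \<Rightarrow> 'l" and d :: "'l \<Rightarrow> nat"
  assumes inv: "\<And>l. \<phi> (\<phi> l) = l" and dphi: "\<And>l. d (\<phi> l) = d l"
begin

declare inv[simp]

lemma inj_involution: "inj \<phi>" by (metis inv injI)

lemma mem_image_involution: "l \<in> \<phi> ` S \<longleftrightarrow> \<phi> l \<in> S"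
  by (metis image_iff inv)

lemma basis_image: "a \<in> basis d (\<phi> ` S) \<longleftrightarrow> a \<circ> \<phi> \<in> basis d S"
  unfolding basis_def using dphi by (auto simp: mem_image_involution)

lemma comp_involution[simp]: "(a \<circ> \<phi>) \<circ> \<phi> = a" by (simp add: fun_eq_iff)

lemma sum_basis_image: "(\<Sum>a\<in>basis d (\<phi> ` S). f a) = (\<Sum>a\<in>basis d S. f (a \<circ> \<phi>))"
proof -
  have "bij_betw (\<lambda>a. a \<circ> \<phi>) (basis d S) (basis d (\<phi> ` S))"
    by (rule bij_betw_byWitness[where f'="\<lambda>a. a \<circ> \<phi>"]) (auto simp: comp_involution basis_image)
  then show ?thesis using sum.reindex_bij_betw[of "\<lambda>a. a \<circ> \<phi>" "basis d S" "basis d (\<phi> ` S)" f] by simp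
qed

lemma psd_relab: "psd d S M \<Longrightarrow> psd d (\<phi> ` S) (relab \<phi> M)"
  unfolding psd_iff_psd_on psd_on_def quad_form_def relab_def sum_basis_image
proof (intro allI)
  fix v assume h: "\<forall>v. nonneg (\<Sum>a\<in>basis d S. \<Sum>b\<in>basis d S. cnj (v a) * M a b * v b)"
  show "nonneg (\<Sum>a\<in>basis d S. \<Sum>b\<in>basis d S. cnj (v (a \<circ> \<phi>)) * M (a \<circ> \<phi> \<circ> \<phi>) (b \<circ> \<phi> \<circ> \<phi>) * v (b \<circ> \<phi>))"
    using h[rule_format, of "\<lambda>a. v (a \<circ> \<phi>)"] by simp
qed

lemma join_image: "join (\<phi> ` T) a c \<circ> \<phi> = join T (a \<circ> \<phi>) (c \<circ> \<phi>)"
  by (auto simp: join_def fun_eq_iff mem_image_involution)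

lemma ptrace_relab: "ptrace d (\<phi> ` T) (relab \<phi> M) = relab \<phi> (ptrace d T M)"
  unfolding ptrace_def relab_def sum_basis_image join_image by simp

lemma idop_relab: "relab \<phi> (idop T) = idop (\<phi> ` T)"
  by (auto simp: relab_def idop_def fun_eq_iff mem_image_involution)

lemma zero_on_image: "zero_on (\<phi> ` T) a \<circ> \<phi> = zero_on T (a \<circ> \<phi>)"
  by (auto simp: zero_on_def fun_eq_iff mem_image_involution)

lemma ident_tensor_relab: "relab \<phi> (ident_tensor T M) = ident_tensor (\<phi> ` T) (relab \<phi> M)"
proof (intro ext)
  fix a b
  have "idop (\<phi> ` T) a b = idop T (a \<circ> \<phi>) (b \<circ> \<phi>)" using idop_relab by (metis relab_def)
  then show "relab \<phi> (ident_tensor T M) a b = ident_tensor (\<phi> ` T) (relab \<phi> M) a b"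
    by (simp add: ident_tensor_def relab_def zero_on_image)
qed

lemma op_eq_relab: "op_eq d S A B \<Longrightarrow> op_eq d (\<phi> ` S) (relab \<phi> A) (relab \<phi> B)"
  unfolding op_eq_def relab_def by (simp add: basis_image)

lemma inner_relab: "inner_op d (\<phi> ` S) (relab \<phi> A) (relab \<phi> B) = inner_op d S A B"
  unfolding inner_op_def relab_def sum_basis_image by simp

lemma upto_round_image: "upto_round (\<lambda>j. \<phi> ` Y j) (\<lambda>j. \<phi> ` X j) j = \<phi> ` upto_round Y X j"
  by (auto simp: upto_round_def)

lemma image_Diff_involution: "\<phi> ` (A - B) = \<phi> ` A - \<phi> ` B"
  using inj_involution by (simp add: image_set_diff)

lemma strategy_on_relab:
  assumes "strategy_on d r Y X Xs"
  shows "strategy_on d r (\<lambda>j. \<phi> ` Y j) (\<lambda>j. \<phi> ` X j) (\<lambda>j. relab \<phi> (Xs j))"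
  using assms unfolding strategy_on_def upto_round_image
  by (auto simp: psd_relab ptrace_relab idop_relab[symmetric] ident_tensor_relab[symmetric] image_Diff_involution[symmetric]
      intro!: op_eq_relab)

end

section \<open>Parallel copies\<close>

definition ans_regs :: "nat set \<Rightarrow> nat \<Rightarrow> lab set" where
  "ans_regs K j = {(k, j', b). k \<in> K \<and> j' = j \<and> b}"
definition qst_regs :: "nat set \<Rightarrow> nat \<Rightarrow> lab set" where
  "qst_regs K j = {(k, j', b). k \<in> K \<and> j' = j \<and> \<not> b}"
definition shifted_ans_regs :: "nat set \<Rightarrow> nat \<Rightarrow> lab set" where
  "shifted_ans_regs K = shift_round (ans_regs K)"
definition swap_copy :: "nat \<Rightarrow> lab \<Rightarrow> lab" where
  "swap_copy n = (\<lambda>(c, j, b). (if c = 0 then n else if c = n then 0 else c, j, b))"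
definition copy_labels :: "nat set \<Rightarrow> lab set" where
  "copy_labels K = {l. fst l \<in> K}"
definition reloc :: "nat \<Rightarrow> lab op \<Rightarrow> lab op" where
  "reloc k M = (\<lambda>a b. M (loc k a) (loc k b))"

lemma label_involution_swap_copy: "label_involution (swap_copy n) (dimf dx dy)"
  by unfold_locales (auto simp: swap_copy_def dimf_def split: prod.splits)

lemma ans_regs_image: "(\<lambda>k. (k, j, True)) ` K = ans_regs K j"
  by (auto simp: ans_regs_def)
lemma qst_regs_image: "(\<lambda>k. (k, j, False)) ` K = qst_regs K j"
  by (auto simp: qst_regs_def)

lemma ans_regs_Un: "ans_regs K1 j \<union> ans_regs K2 j = ans_regs (K1 \<union> K2) j" by (auto simp: ans_regs_def)
lemma qst_regs_Un: "qst_regs K1 j \<union> qst_regs K2 j = qst_regs (K1 \<union> K2) j" by (auto simp: qst_regs_def)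
lemma shifted_ans_regs_Un: "shifted_ans_regs K1 j \<union> shifted_ans_regs K2 j = shifted_ans_regs (K1 \<union> K2) j" by (auto simp: shifted_ans_regs_def shift_round_def ans_regs_Un)

lemma swap_copy_ans_regs: "swap_copy n ` ans_regs {0} j = ans_regs {n} j" by (force simp: ans_regs_def swap_copy_def)
lemma swap_copy_qst_regs: "swap_copy n ` qst_regs {0} j = qst_regs {n} j" by (force simp: qst_regs_def swap_copy_def)
lemma swap_copy_shifted_ans_regs: "swap_copy n ` shifted_ans_regs {0} j = shifted_ans_regs {n} j" by (simp add: shifted_ans_regs_def shift_round_def swap_copy_ans_regs)

lemma ans_regs_copy_labels: "ans_regs K j \<subseteq> copy_labels K" by (auto simp: ans_regs_def copy_labels_def)
lemma qst_regs_copy_labels: "qst_regs K j \<subseteq> copy_labels K" by (auto simp: qst_regs_def copy_labels_def)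
lemma shifted_ans_regs_copy_labels: "shifted_ans_regs K j \<subseteq> copy_labels K" by (auto simp: shifted_ans_regs_def shift_round_def ans_regs_def copy_labels_def)

lemma disjoint_registers_ans_qst: "finite K \<Longrightarrow> disjoint_registers r (ans_regs K) (qst_regs K)"
  unfolding disjoint_registers_def by (auto simp: ans_regs_image[symmetric] qst_regs_image[symmetric])

lemma disjoint_registers_qst_shifted: "finite K \<Longrightarrow> disjoint_registers r (qst_regs K) (shifted_ans_regs K)"
  unfolding shifted_ans_regs_def by (rule disjoint_registers_shift[OF disjoint_registers_ans_qst])

lemma upto_round_copy_labels: "(\<And>j. FY K j \<subseteq> copy_labels K) \<Longrightarrow> (\<And>j. FX K j \<subseteq> copy_labels K) \<Longrightarrow> upto_round (FY K) (FX K) j \<subseteq> copy_labels K"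
  by (auto simp: upto_round_def)

lemma Lab_eq_upto_round: "Lab n j = upto_round (ans_regs {..<n}) (qst_regs {..<n}) j"
  by (auto simp: Lab_def upto_round_def ans_regs_def qst_regs_def)

lemma Ylab_eq_ans_regs: "Ylab n j = ans_regs {..<n} j" by (auto simp: Ylab_def ans_regs_def)
lemma Xlab_eq_qst_regs: "Xlab n j = qst_regs {..<n} j" by (auto simp: Xlab_def qst_regs_def)

lemma loc_restr_inside: "k < n \<Longrightarrow> loc k (restr (copy_labels {..<n}) a) = loc k a"
  by (auto simp: loc_def restr_def copy_labels_def fun_eq_iff)

lemma loc_restr_outside: "loc n (restr (- copy_labels {..<n}) a) = loc n a"
  by (auto simp: loc_def restr_def copy_labels_def fun_eq_iff)

lemma tensor_copies_Suc:
  "tensor_copies (Suc n) Q = tensor_op (copy_labels {..<n}) (tensor_copies n Q) (reloc n (Q n))"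
  by (simp add: tensor_copies_def tensor_op_def reloc_def fun_eq_iff loc_restr_inside loc_restr_outside)

lemma loc_eq_swap_copy: "a \<in> basis d S \<Longrightarrow> S \<subseteq> copy_labels {n} \<Longrightarrow> loc n a = a \<circ> swap_copy n"
proof -
  assume a: "a \<in> basis d S" and S: "S \<subseteq> copy_labels {n}"
  have z: "a (c, j, b) = 0" if "c \<noteq> n" for c j b
  proof -
    have "(c, j, b) \<notin> S" using S that by (auto simp: copy_labels_def)
    then show ?thesis using a by (simp add: basis_def)
  qed
  show ?thesis
  proof (rule ext)
    fix l :: lab
    obtain c j b where l: "l = (c, j, b)" by (cases l) auto
    show "loc n a l = (a \<circ> swap_copy n) l"
      unfolding l loc_def swap_copy_def using z by auto
  qed
qed

lemma op_eq_trans: "op_eq d S A B \<Longrightarrow> op_eq d S B C \<Longrightarrow> op_eq d S A C"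
  by (simp add: op_eq_def)
lemma op_eq_sym: "op_eq d S A B \<Longrightarrow> op_eq d S B A"
  by (simp add: op_eq_def)

lemma ptrace_cong: "S \<inter> T = {} \<Longrightarrow> op_eq d (S \<union> T) M M' \<Longrightarrow> op_eq d S (ptrace d T M) (ptrace d T M')"
  unfolding op_eq_def ptrace_def by (simp add: join_in_basis)

lemma zero_on_in: "a \<in> basis d (S \<union> T) \<Longrightarrow> S \<inter> T = {} \<Longrightarrow> zero_on T a \<in> basis d S"
  by (auto simp: basis_def zero_on_def)

lemma ident_tensor_cong: "S \<inter> T = {} \<Longrightarrow> op_eq d S M M' \<Longrightarrow> op_eq d (S \<union> T) (ident_tensor T M) (ident_tensor T M')"
  unfolding op_eq_def ident_tensor_def by (simp add: zero_on_in)

lemma strategy_on_cong: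
  assumes w: "disjoint_registers r Y X" and G: "strategy_on d r Y X Xs" and e: "\<And>j. j \<in> {1..r} \<Longrightarrow> op_eq d (upto_round Y X j) (Xs j) (Xs' j)"
    and r: "1 \<le> r"
  shows "strategy_on d r Y X Xs'"
  unfolding strategy_on_def
proof (intro conjI ballI)
  fix j assume j: "j \<in> {1..r}"
  have "psd d (upto_round Y X j) (Xs j)" using G j by (simp add: strategy_on_def)
  then show "psd d (upto_round Y X j) (Xs' j)" using e[OF j] psd_cong by blast
next
  have j1: "1 \<in> {1..r}" using r by simp
  have d1: "X 1 \<inter> Y 1 = {}" using disjoint_registers_round(3)[OF w j1] by blast
  have L1: "upto_round Y X 1 = X 1 \<union> Y 1" using upto_round_Suc[of Y X 0] by auto
  have "op_eq d (X 1) (ptrace d (Y 1) (Xs' 1)) (ptrace d (Y 1) (Xs 1))"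
    by (rule ptrace_cong[OF d1]) (use e[OF j1] L1 op_eq_sym in metis)
  moreover have "op_eq d (X 1) (ptrace d (Y 1) (Xs 1)) (idop (X 1))" using G by (simp add: strategy_on_def)
  ultimately show "op_eq d (X 1) (ptrace d (Y 1) (Xs' 1)) (idop (X 1))" by (rule op_eq_trans)
next
  fix j assume j2: "j \<in> {2..r}"
  then have j: "j \<in> {1..r}" and jp: "j - 1 \<in> {1..r}" by auto
  have eq1: "upto_round Y X j - Y j = upto_round Y X (j - 1) \<union> X j" using upto_round_Diff_answer[OF w j] .
  have eq2: "upto_round Y X j = (upto_round Y X j - Y j) \<union> Y j" using round_subset_upto_round[of j j Y X] j by auto
  have "op_eq d (upto_round Y X j - Y j) (ptrace d (Y j) (Xs' j)) (ptrace d (Y j) (Xs j))"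
    by (rule ptrace_cong) (use e[OF j] eq2 op_eq_sym in \<open>auto\<close>)
  moreover have "op_eq d (upto_round Y X j - Y j) (ptrace d (Y j) (Xs j)) (ident_tensor (X j) (Xs (j - 1)))"
    using G j2 by (simp add: strategy_on_def)
  moreover have "op_eq d (upto_round Y X j - Y j) (ident_tensor (X j) (Xs (j - 1))) (ident_tensor (X j) (Xs' (j - 1)))"
    unfolding eq1 by (rule ident_tensor_cong) (use disjoint_registers_round(2)[OF w j] e[OF jp] in auto)
  ultimately show "op_eq d (upto_round Y X j - Y j) (ptrace d (Y j) (Xs' j)) (ident_tensor (X j) (Xs' (j - 1)))"
    by (meson op_eq_trans)
qed

lemma psd_empty_one: "psd d {} (\<lambda>_ _. 1)"
  unfolding psd_iff_psd_on psd_on_def quad_form_def basis_empty by (simp add: nonneg_cnj_mult)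

lemma strategy_on_empty: "strategy_on d r (\<lambda>_. {}) (\<lambda>_. {}) (\<lambda>j a b. 1)"
  unfolding strategy_on_def
  by (auto simp: upto_round_def psd_empty_one op_eq_def ptrace_def basis_empty idop_def ident_tensor_def)

lemma op_eq_tensor_op_relab_reloc:
  assumes L1: "S1 \<subseteq> copy_labels {..<n}" and L2: "S2 \<subseteq> copy_labels {n}"
  shows "op_eq (dimf dx dy) (S1 \<union> S2) (tensor_op (copy_labels {..<n}) A (relab (swap_copy n) B))
           (tensor_op (copy_labels {..<n}) A (reloc n B))"
  unfolding op_eq_def
proof (intro ballI)
  fix a b assume a: "a \<in> basis (dimf dx dy) (S1 \<union> S2)" and b: "b \<in> basis (dimf dx dy) (S1 \<union> S2)"
  have L2U: "S2 \<inter> copy_labels {..<n} = {}" using L2 by (auto simp: copy_labels_def)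
  have a2: "restr (- copy_labels {..<n}) a \<in> basis (dimf dx dy) S2" using restr_outside_in_basis[OF a L1 L2U] .
  have b2: "restr (- copy_labels {..<n}) b \<in> basis (dimf dx dy) S2" using restr_outside_in_basis[OF b L1 L2U] .
  show "tensor_op (copy_labels {..<n}) A (relab (swap_copy n) B) a b = tensor_op (copy_labels {..<n}) A (reloc n B) a b"
    unfolding tensor_op_def relab_def reloc_def loc_eq_swap_copy[OF a2 L2] loc_eq_swap_copy[OF b2 L2] ..
qed

lemma strategy_on_tensor_copies:
  fixes FY FX :: "nat set \<Rightarrow> nat \<Rightarrow> lab set"
  assumes r: "1 \<le> r"
    and hUY: "\<And>K1 K2 j. FY K1 j \<union> FY K2 j = FY (K1 \<union> K2) j"
    and hUX: "\<And>K1 K2 j. FX K1 j \<union> FX K2 j = FX (K1 \<union> K2) j"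
    and hSY: "\<And>n j. swap_copy n ` FY {0} j = FY {n} j"
    and hSX: "\<And>n j. swap_copy n ` FX {0} j = FX {n} j"
    and hCY: "\<And>K j. FY K j \<subseteq> copy_labels K"
    and hCX: "\<And>K j. FX K j \<subseteq> copy_labels K"
    and hW: "\<And>K. finite K \<Longrightarrow> disjoint_registers r (FY K) (FX K)"
    and G: "strategy_on (dimf dx dy) r (FY {0}) (FX {0}) F"
  shows "strategy_on (dimf dx dy) r (FY {..<n}) (FX {..<n}) (\<lambda>j. tensor_copies n (\<lambda>_. F j))"
proof (induction n)
  case 0
  have "FY {..<0} = (\<lambda>_. {})" "FX {..<0} = (\<lambda>_. {})" using hCY[of "{}"] hCX[of "{}"] by (auto simp: copy_labels_def fun_eq_iff)
  moreover have "(\<lambda>j. tensor_copies 0 (\<lambda>_. F j)) = (\<lambda>j a b. 1)" by (simp add: tensor_copies_def fun_eq_iff)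
  ultimately show ?case by (simp add: strategy_on_empty)
next
  case (Suc n)
  let ?d = "dimf dx dy"
  let ?U = "copy_labels {..<n}"
  interpret iv: label_involution "swap_copy n" ?d by (rule label_involution_swap_copy)
  have B0: "strategy_on ?d r (FY {n}) (FX {n}) (\<lambda>j. relab (swap_copy n) (F j))"
    using iv.strategy_on_relab[OF G] by (simp add: hSY hSX)
  have w1: "disjoint_registers r (FY {..<n}) (FX {..<n})" and w2: "disjoint_registers r (FY {n}) (FX {n})" using hW by auto
  have UU: "copy_labels {n} \<inter> ?U = {}" by (auto simp: copy_labels_def)
  have s: "separated_by r (FY {..<n}) (FX {..<n}) (FY {n}) (FX {n}) ?U"
    unfolding separated_by_def using hCY hCX UU by blast
  have T: "strategy_on ?d r (\<lambda>j. FY {..<n} j \<union> FY {n} j) (\<lambda>j. FX {..<n} j \<union> FX {n} j)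
       (\<lambda>j. tensor_op ?U (tensor_copies n (\<lambda>_. F j)) (relab (swap_copy n) (F j)))"
    by (rule strategy_on_tensor_op[OF r w1 w2 s Suc B0])
  have fam: "(\<lambda>j. FY {..<n} j \<union> FY {n} j) = FY {..<Suc n}" "(\<lambda>j. FX {..<n} j \<union> FX {n} j) = FX {..<Suc n}"
    by (simp_all add: hUY hUX lessThan_Suc fun_eq_iff)
  have wS: "disjoint_registers r (FY {..<Suc n}) (FX {..<Suc n})" using hW by simp
  show ?case
  proof (rule strategy_on_cong[OF wS T[unfolded fam] _ r])
    fix j assume j: "j \<in> {1..r}"
    have "upto_round (FY {..<Suc n}) (FX {..<Suc n}) j = upto_round (FY {..<n}) (FX {..<n}) j \<union> upto_round (FY {n}) (FX {n}) j"
      using upto_round_Un[of "FY {..<n}" "FY {n}" "FX {..<n}" "FX {n}" j] fam by simp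
    then show "op_eq ?d (upto_round (FY {..<Suc n}) (FX {..<Suc n}) j)
        (tensor_op ?U (tensor_copies n (\<lambda>_. F j)) (relab (swap_copy n) (F j))) (tensor_copies (Suc n) (\<lambda>_. F j))"
      unfolding tensor_copies_Suc
      by (metis op_eq_tensor_op_relab_reloc upto_round_copy_labels hCX hCY)
  qed
qed

lemma strategy_iff_strategy_on:
  "strategy d r n X \<longleftrightarrow> psd d (Lab n r) X \<and> (\<exists>Xs. strategy_on d r (ans_regs {..<n}) (qst_regs {..<n}) Xs \<and> op_eq d (Lab n r) (Xs r) X)"
  unfolding strategy_def strategy_on_def Lab_eq_upto_round Ylab_eq_ans_regs Xlab_eq_qst_regs by blast

lemma upto_round_ans_qst: "upto_round (ans_regs K) (qst_regs K) j = {(k, j', b). k \<in> K \<and> 1 \<le> j' \<and> j' \<le> j}"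
  by (auto simp: upto_round_def ans_regs_def qst_regs_def)

lemma upto_round_qst_shifted: "1 \<le> j \<Longrightarrow> upto_round (qst_regs {0}) (shifted_ans_regs {0}) j = RL j"
proof -
  assume j: "1 \<le> j"
  have "upto_round (qst_regs {0}) (shifted_ans_regs {0}) j = upto_round (ans_regs {0}) (qst_regs {0}) (j - 1) \<union> qst_regs {0} j"
    unfolding shifted_ans_regs_def using upto_round_shift[OF j] .
  also have "\<dots> = RL j"
    using j unfolding upto_round_ans_qst by (auto simp: qst_regs_def RL_def split: if_splits)
  finally show ?thesis .
qed

lemma join_zero_basis: "c \<in> basis d T \<Longrightarrow> join T (\<lambda>_. 0) c = c"
  by (auto simp: basis_def join_def fun_eq_iff)

lemma verifier_costrategy:
  assumes r: "1 \<le> r" and V: "verifier d r t P"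
  shows "\<exists>R. strategy_on d r (qst_regs {0}) (shifted_ans_regs {0}) R \<and>
     op_eq d (upto_round (ans_regs {0}) (qst_regs {0}) r) (\<lambda>a b. \<Sum>i<t. P i a b) (ident_tensor (ans_regs {0} r) (R r))"
proof -
  obtain R where R1: "psd d (Xlab 1 1) (R 1)" and tr1: "tr d (Xlab 1 1) (R 1) = 1"
    and Rp: "\<forall>j\<in>{2..r}. psd d (RL j) (R j)"
    and Rc: "\<forall>j\<in>{1..r-1}. op_eq d (RL j \<union> Ylab 1 j) (ptrace d (Xlab 1 (j+1)) (R (j+1))) (ident_tensor (Ylab 1 j) (R j))"
    and Rs: "op_eq d (Lab 1 r) (\<lambda>a b. \<Sum>i<t. P i a b) (ident_tensor (Ylab 1 r) (R r))"
    using V unfolding verifier_def by blast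
  have X1: "Xlab 1 j = qst_regs {0} j" for j by (simp add: Xlab_eq_qst_regs lessThan_Suc)
  have Y1: "Ylab 1 j = ans_regs {0} j" for j by (simp add: Ylab_eq_ans_regs lessThan_Suc)
  have L1: "Lab 1 j = upto_round (ans_regs {0}) (qst_regs {0}) j" for j by (simp add: Lab_eq_upto_round lessThan_Suc)
  have G: "strategy_on d r (qst_regs {0}) (shifted_ans_regs {0}) R"
    unfolding strategy_on_def
  proof (intro conjI ballI)
    fix j assume j: "j \<in> {1..r}"
    show "psd d (upto_round (qst_regs {0}) (shifted_ans_regs {0}) j) (R j)"
    proof (cases "j = 1")
      case True
      have "RL 1 = Xlab 1 1" by (auto simp: RL_def Xlab_def)
      then show ?thesis using R1 True upto_round_qst_shifted[of 1] by simp
    next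
      case False then show ?thesis using Rp j upto_round_qst_shifted[of j] by auto
    qed
  next
    show "op_eq d (shifted_ans_regs {0} 1) (ptrace d (qst_regs {0} 1) (R 1)) (idop (shifted_ans_regs {0} 1))"
      using tr1 unfolding op_eq_def shifted_ans_regs_def shift_round_def tr_def ptrace_def X1
      by (simp add: basis_empty idop_def join_zero_basis cong: sum.cong)
  next
    fix j assume j: "j \<in> {2..r}"
    then have jm: "j - 1 \<in> {1..r-1}" and jj: "j - 1 + 1 = j" by auto
    have rl: "upto_round (qst_regs {0}) (shifted_ans_regs {0}) j = RL j" using upto_round_qst_shifted[of j] j by simp
    have e: "upto_round (qst_regs {0}) (shifted_ans_regs {0}) j - qst_regs {0} j = RL (j - 1) \<union> Ylab 1 (j - 1)"
      using j unfolding rl by (auto simp: RL_def qst_regs_def Ylab_def split: if_splits)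
    have s: "shifted_ans_regs {0} j = Ylab 1 (j - 1)" using j Y1[of "j - 1"] by (simp add: shifted_ans_regs_def shift_round_def)
    show "op_eq d (upto_round (qst_regs {0}) (shifted_ans_regs {0}) j - qst_regs {0} j) (ptrace d (qst_regs {0} j) (R j)) (ident_tensor (shifted_ans_regs {0} j) (R (j - 1)))"
      unfolding e s using Rc jm jj X1 by metis
  qed
  show ?thesis using G Rs unfolding L1 Y1 by blast
qed

section \<open>Total value of an n-fold strategy\<close>

lemma inner_tensor_op_left:
  assumes f: "finite S1" "finite S2" "S1 \<inter> S2 = {}" and U: "S1 \<subseteq> U" "S2 \<inter> U = {}"
  shows "inner_op d (S1 \<union> S2) (tensor_op U A B) X = inner_op d S1 A (contract d S2 B X)"
proof -
  have "inner_op d (S1 \<union> S2) (tensor_op U A B) X = (\<Sum>a\<in>basis d S1. \<Sum>c\<in>basis d S2. \<Sum>b\<in>basis d S1. \<Sum>e\<in>basis d S2.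
      cnj (A a b) * (cnj (B c e) * X (join S2 a c) (join S2 b e)))"
    unfolding inner_op_def sum_basis_Un[OF f]
    by (intro sum.cong refl) (simp add: tensor_op_def restr_join_inside restr_join_outside U)
  also have "\<dots> = (\<Sum>a\<in>basis d S1. \<Sum>b\<in>basis d S1. \<Sum>c\<in>basis d S2. \<Sum>e\<in>basis d S2.
      cnj (A a b) * (cnj (B c e) * X (join S2 a c) (join S2 b e)))"
    by (rule sum_swap_inner)
  also have "\<dots> = inner_op d S1 A (contract d S2 B X)"
    unfolding inner_op_def contract_def by (simp add: sum_distrib_left)
  finally show ?thesis .
qed

lemma tensor_op_commute: "tensor_op U A B = tensor_op (-U) B A"
  by (simp add: tensor_op_def fun_eq_iff mult.commute)

lemma inner_tensor_op_right:
  assumes f: "finite S1" "finite S2" "S1 \<inter> S2 = {}" and U: "S1 \<subseteq> U" "S2 \<inter> U = {}"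
  shows "inner_op d (S1 \<union> S2) (tensor_op U A B) X = inner_op d S2 B (contract d S1 A X)"
proof -
  have "inner_op d (S2 \<union> S1) (tensor_op (-U) B A) X = inner_op d S2 B (contract d S1 A X)"
    by (rule inner_tensor_op_left) (use f U in auto)
  then show ?thesis by (simp add: tensor_op_commute[of U A B] Un_commute)
qed

lemma inner_op_sum_right: "inner_op d S A (\<lambda>a b. \<Sum>i\<in>I. F i a b) = (\<Sum>i\<in>I. inner_op d S A (F i))"
proof -
  have "inner_op d S A (\<lambda>a b. \<Sum>i\<in>I. F i a b) = (\<Sum>a\<in>basis d S. \<Sum>b\<in>basis d S. \<Sum>i\<in>I. cnj (A a b) * F i a b)"
    unfolding inner_op_def by (simp add: sum_distrib_left)
  also have "\<dots> = (\<Sum>i\<in>I. inner_op d S A (F i))" unfolding inner_op_def by (rule sum_swap_outer3)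
  finally show ?thesis .
qed

lemma contract_sum: "contract d S (\<lambda>a b. \<Sum>i\<in>I. F i a b) X a b = (\<Sum>i\<in>I. contract d S (F i) X a b)"
proof -
  have "contract d S (\<lambda>a b. \<Sum>i\<in>I. F i a b) X a b = (\<Sum>c\<in>basis d S. \<Sum>e\<in>basis d S. \<Sum>i\<in>I. cnj (F i c e) * X (join S a c) (join S b e))"
    unfolding contract_def by (simp add: sum_distrib_right)
  also have "\<dots> = (\<Sum>i\<in>I. contract d S (F i) X a b)" unfolding contract_def by (rule sum_swap_outer3)
  finally show ?thesis .
qed

lemma inner_op_cong_right: "op_eq d S X X' \<Longrightarrow> inner_op d S A X = inner_op d S A X'"
  unfolding op_eq_def inner_op_def by simp

lemma inner_op_cong_left: "op_eq d S A A' \<Longrightarrow> inner_op d S A X = inner_op d S A' X"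
  unfolding op_eq_def inner_op_def by simp

lemma sum_PiE_Suc:
  "(\<Sum>g\<in>PiE {..<Suc n} (\<lambda>_. A). f g) = (\<Sum>g\<in>PiE {..<n} (\<lambda>_. A). \<Sum>y\<in>A. f (g(n := y)))"
proof -
  have "(\<Sum>g\<in>PiE (insert n {..<n}) (\<lambda>_. A). f g) = (\<Sum>(y,g)\<in>A \<times> PiE {..<n} (\<lambda>_. A). f (g(n := y)))"
    by (rule sum.reindex_bij_witness[of _ "\<lambda>(y,g). g(n := y)" "\<lambda>g. (g n, g(n := undefined))"])
       (auto simp: PiE_def extensional_def)
  also have "\<dots> = (\<Sum>y\<in>A. \<Sum>g\<in>PiE {..<n} (\<lambda>_. A). f (g(n := y)))"
    by (rule sum.cartesian_product[symmetric])
  also have "\<dots> = (\<Sum>g\<in>PiE {..<n} (\<lambda>_. A). \<Sum>y\<in>A. f (g(n := y)))"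
    by (rule sum.swap)
  finally show ?thesis by (simp add: lessThan_Suc)
qed

lemma sum_tensor_copies:
  "(\<Sum>g\<in>PiE {..<n} (\<lambda>_. {..<t::nat}). tensor_copies n (\<lambda>k. P (g k)) a b) = tensor_copies n (\<lambda>_. \<lambda>a b. \<Sum>s<t. P s a b) a b"
  unfolding tensor_copies_def by (rule prod_sum_PiE[symmetric]) auto

lemma tensor_copies_cong: "(\<And>k. k < n \<Longrightarrow> Q k = Q' k) \<Longrightarrow> tensor_copies n Q = tensor_copies n Q'"
  unfolding tensor_copies_def by (auto simp: fun_eq_iff intro!: prod.cong)

text \<open>\<open>n\<close> times the averaged payoff of the theorem; dividing by \<open>n\<close> is postponed to the end.\<close>
definition total_value :: "(lab \<Rightarrow> nat) \<Rightarrow> nat \<Rightarrow> nat \<Rightarrow> (nat \<Rightarrow> real) \<Rightarrow> (nat \<Rightarrow> lab op) \<Rightarrow> nat \<Rightarrow> lab op \<Rightarrow> complex" where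
  "total_value d r t vals P n X = (\<Sum>g\<in>PiE {..<n} (\<lambda>_. {..<t}).
      complex_of_real (\<Sum>k<n. vals (g k)) * inner_op d (Lab n r) (tensor_copies n (\<lambda>k. P (g k))) X)"

definition last_copy :: "nat \<Rightarrow> nat \<Rightarrow> lab set" where
  "last_copy n r = upto_round (ans_regs {n}) (qst_regs {n}) r"

lemma Lab_Suc: "Lab (Suc n) r = Lab n r \<union> last_copy n r"
  unfolding Lab_eq_upto_round last_copy_def upto_round_Un[symmetric] ans_regs_Un qst_regs_Un by (simp add: lessThan_Suc)

lemma finite_Lab: "finite (Lab n r)"
  unfolding Lab_eq_upto_round by (rule finite_upto_round[OF disjoint_registers_ans_qst]) auto

lemma finite_last_copy: "finite (last_copy n r)"
  unfolding last_copy_def by (rule finite_upto_round[OF disjoint_registers_ans_qst]) auto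

lemma Lab_copy_labels: "Lab n r \<subseteq> copy_labels {..<n}"
  unfolding Lab_eq_upto_round by (rule upto_round_copy_labels[of ans_regs "{..<n}" qst_regs]) (simp_all add: ans_regs_copy_labels qst_regs_copy_labels)

lemma last_copy_copy_labels: "last_copy n r \<subseteq> copy_labels {n}"
  unfolding last_copy_def by (rule upto_round_copy_labels[of ans_regs "{n}" qst_regs]) (simp_all add: ans_regs_copy_labels qst_regs_copy_labels)

lemma last_copy_disjoint: "last_copy n r \<inter> copy_labels {..<n} = {}"
  using last_copy_copy_labels[of n r] by (auto simp: copy_labels_def)

lemma Lab_Int_last_copy: "Lab n r \<inter> last_copy n r = {}"
  using Lab_copy_labels[of n r] last_copy_disjoint[of n r] by blast

lemma total_value_cong: "op_eq d (Lab n r) X X' \<Longrightarrow> total_value d r t vals P n X = total_value d r t vals P n X'"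
  unfolding total_value_def using inner_op_cong_right by (metis (no_types, lifting))

lemma total_value_0: "total_value d r t vals P 0 X = 0"
  by (simp add: total_value_def)

lemma total_value_summand_Suc:
  fixes d :: "lab \<Rightarrow> nat" and P :: "nat \<Rightarrow> lab op" and n :: nat and g :: "nat \<Rightarrow> nat"
  defines "A \<equiv> tensor_copies n (\<lambda>k. P (g k))"
  shows "complex_of_real (\<Sum>k<Suc n. vals ((g(n := y)) k)) *
        inner_op d (Lab (Suc n) r) (tensor_copies (Suc n) (\<lambda>k. P ((g(n := y)) k))) X
     = complex_of_real (\<Sum>k<n. vals (g k)) * inner_op d (Lab n r) A (contract d (last_copy n r) (reloc n (P y)) X)
       + complex_of_real (vals y) * inner_op d (last_copy n r) (reloc n (P y)) (contract d (Lab n r) A X)"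
proof -
  let ?U = "copy_labels {..<n}"
  have f: "finite (Lab n r)" "finite (last_copy n r)" "Lab n r \<inter> last_copy n r = {}"
    and U: "Lab n r \<subseteq> ?U" "last_copy n r \<inter> ?U = {}"
    using finite_Lab finite_last_copy Lab_Int_last_copy Lab_copy_labels last_copy_disjoint by auto
  have s: "(\<Sum>k<Suc n. vals ((g(n := y)) k)) = (\<Sum>k<n. vals (g k)) + vals y" by simp
  have "tensor_copies n (\<lambda>k. P ((g(n := y)) k)) = A" unfolding A_def by (rule tensor_copies_cong) simp
  then have tc: "tensor_copies (Suc n) (\<lambda>k. P ((g(n := y)) k)) = tensor_op ?U A (reloc n (P y))"
    unfolding tensor_copies_Suc by simp
  show ?thesis
    unfolding s tc Lab_Suc inner_tensor_op_left[OF f U, symmetric] inner_tensor_op_right[OF f U, symmetric]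
    by (simp add: algebra_simps)
qed

lemma total_value_Suc:
  fixes d :: "lab \<Rightarrow> nat" and t :: nat and P :: "nat \<Rightarrow> lab op"
  defines "SP \<equiv> (\<lambda>a b. \<Sum>s<t. P s a b)"
  shows "total_value d r t vals P (Suc n) X = total_value d r t vals P n (contract d (last_copy n r) (reloc n SP) X)
     + (\<Sum>s<t. complex_of_real (vals s) * inner_op d (last_copy n r) (reloc n (P s)) (contract d (Lab n r) (tensor_copies n (\<lambda>_. SP)) X))"
proof -
  let ?A = "\<lambda>g. tensor_copies n (\<lambda>k. P (g k))"
  have "total_value d r t vals P (Suc n) X = (\<Sum>g\<in>PiE {..<n} (\<lambda>_. {..<t}). \<Sum>y<t.
       complex_of_real (\<Sum>k<n. vals (g k)) * inner_op d (Lab n r) (?A g) (contract d (last_copy n r) (reloc n (P y)) X)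
       + complex_of_real (vals y) * inner_op d (last_copy n r) (reloc n (P y)) (contract d (Lab n r) (?A g) X))"
    unfolding total_value_def sum_PiE_Suc total_value_summand_Suc ..
  also have "\<dots> = (\<Sum>g\<in>PiE {..<n} (\<lambda>_. {..<t}). \<Sum>y<t.
       complex_of_real (\<Sum>k<n. vals (g k)) * inner_op d (Lab n r) (?A g) (contract d (last_copy n r) (reloc n (P y)) X))
     + (\<Sum>g\<in>PiE {..<n} (\<lambda>_. {..<t}). \<Sum>y<t.
       complex_of_real (vals y) * inner_op d (last_copy n r) (reloc n (P y)) (contract d (Lab n r) (?A g) X))"
    by (simp add: sum.distrib)
  also have "(\<Sum>g\<in>PiE {..<n} (\<lambda>_. {..<t}). \<Sum>y<t.
       complex_of_real (\<Sum>k<n. vals (g k)) * inner_op d (Lab n r) (?A g) (contract d (last_copy n r) (reloc n (P y)) X))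
     = total_value d r t vals P n (contract d (last_copy n r) (reloc n SP) X)"
    unfolding total_value_def
  proof (intro sum.cong refl)
    fix g
    have "contract d (last_copy n r) (reloc n SP) X = (\<lambda>a b. \<Sum>y<t. contract d (last_copy n r) (reloc n (P y)) X a b)"
      by (simp add: fun_eq_iff contract_sum[symmetric] reloc_def SP_def)
    then show "(\<Sum>y<t. complex_of_real (\<Sum>k<n. vals (g k)) * inner_op d (Lab n r) (?A g) (contract d (last_copy n r) (reloc n (P y)) X))
       = complex_of_real (\<Sum>k<n. vals (g k)) * inner_op d (Lab n r) (?A g) (contract d (last_copy n r) (reloc n SP) X)"
      by (simp add: inner_op_sum_right sum_distrib_left)
  qed
  also have "(\<Sum>g\<in>PiE {..<n} (\<lambda>_. {..<t}). \<Sum>y<t.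
       complex_of_real (vals y) * inner_op d (last_copy n r) (reloc n (P y)) (contract d (Lab n r) (?A g) X))
     = (\<Sum>y<t. \<Sum>g\<in>PiE {..<n} (\<lambda>_. {..<t}).
       complex_of_real (vals y) * inner_op d (last_copy n r) (reloc n (P y)) (contract d (Lab n r) (?A g) X))"
    by (rule sum.swap)
  also have "\<dots> = (\<Sum>s<t. complex_of_real (vals s) * inner_op d (last_copy n r) (reloc n (P s)) (contract d (Lab n r) (tensor_copies n (\<lambda>_. SP)) X))"
  proof (intro sum.cong refl)
    fix y
    have "contract d (Lab n r) (tensor_copies n (\<lambda>_. SP)) X = (\<lambda>a b. \<Sum>g\<in>PiE {..<n} (\<lambda>_. {..<t}). contract d (Lab n r) (?A g) X a b)"
      by (simp add: fun_eq_iff contract_sum[symmetric] sum_tensor_copies SP_def)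
    then show "(\<Sum>g\<in>PiE {..<n} (\<lambda>_. {..<t}). complex_of_real (vals y) * inner_op d (last_copy n r) (reloc n (P y)) (contract d (Lab n r) (?A g) X))
      = complex_of_real (vals y) * inner_op d (last_copy n r) (reloc n (P y)) (contract d (Lab n r) (tensor_copies n (\<lambda>_. SP)) X)"
      by (simp add: inner_op_sum_right sum_distrib_left)
  qed
  finally show ?thesis .
qed

lemma disjoint_registers_empty: "disjoint_registers r (\<lambda>_. {}) (\<lambda>_. {})" by (simp add: disjoint_registers_def)

lemma upto_round_empty: "upto_round (\<lambda>_. {}) (\<lambda>_. {}) j = {}" by (simp add: upto_round_def)

lemma inner_costrategy_eq_1:
  assumes r: "1 \<le> r" and w: "disjoint_registers r Y X" and Xs: "strategy_on d r Y X Xs" and R: "strategy_on d r X (shift_round Y) R"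
  shows "inner_op d (upto_round Y X r) (ident_tensor (Y r) (R r)) (Xs r) = 1"
proof -
  define Z where "Z j = contract d (upto_round Y X j - Y j) (R j) (ptrace d (Y j) (Xs j))" for j
  have s: "separated_by r (\<lambda>_. {}) (\<lambda>_. {}) Y X {}" by (simp add: separated_by_def)
  have Xs': "strategy_on d r (\<lambda>j. {} \<union> Y j) (\<lambda>j. {} \<union> X j) Xs" using Xs by simp
  have G: "strategy_on d r (\<lambda>_. {}) (\<lambda>_. {}) Z"
    using strategy_on_contract[OF r disjoint_registers_empty w s Xs' R] unfolding Z_def .
  have z0: "(\<lambda>_. 0) \<in> basis d {}" by (simp add: basis_empty)
  have ptr0: "ptrace d {} M (\<lambda>_. 0) (\<lambda>_. 0) = M (\<lambda>_. 0) (\<lambda>_. 0)" for M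
    by (simp add: ptrace_def basis_empty join_def)
  have Z1: "j \<in> {1..r} \<Longrightarrow> Z j (\<lambda>_. 0) (\<lambda>_. 0) = 1" for j
  proof (induction j)
    case 0 then show ?case by simp
  next
    case (Suc j)
    show ?case
    proof (cases "j = 0")
      case True
      have "op_eq d {} (ptrace d {} (Z 1)) (idop {})" using G unfolding strategy_on_def by simp
      then have h: "\<forall>a\<in>basis d {}. \<forall>b\<in>basis d {}. ptrace d {} (Z 1) a b = idop {} a b" by (simp add: op_eq_def)
      have "ptrace d {} (Z 1) (\<lambda>_. 0) (\<lambda>_. 0) = 1" using bspec[OF bspec[OF h z0] z0] by (simp add: idop_def)
      then show ?thesis using True by (simp add: ptr0 idop_def)
    next
      case False
      then have "Suc j \<in> {2..r}" "j \<in> {1..r}" using Suc.prems by auto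
      then have "ptrace d {} (Z (Suc j)) (\<lambda>_. 0) (\<lambda>_. 0) = ident_tensor {} (Z j) (\<lambda>_. 0) (\<lambda>_. 0)"
        using G unfolding strategy_on_def op_eq_def upto_round_empty by (simp add: basis_empty)
      then show ?thesis using Suc.IH \<open>j \<in> {1..r}\<close> by (simp add: ptr0 ident_tensor_def idop_def zero_on_def)
    qed
  qed
  have rr: "r \<in> {1..r}" using r by simp
  have e: "upto_round Y X r = (upto_round Y X r - Y r) \<union> Y r" using round_subset_upto_round[of r r Y X] r by auto
  have "contract d (upto_round Y X r) (ident_tensor (Y r) (R r)) (Xs r) (\<lambda>_. 0) (\<lambda>_. 0) = Z r (\<lambda>_. 0) (\<lambda>_. 0)"
    unfolding Z_def by (subst e, rule contract_ident_tensor) (use finite_upto_round[OF w] disjoint_registers_finite[OF w rr] in auto)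
  moreover have "contract d (upto_round Y X r) (ident_tensor (Y r) (R r)) (Xs r) (\<lambda>_. 0) (\<lambda>_. 0) = inner_op d (upto_round Y X r) (ident_tensor (Y r) (R r)) (Xs r)"
    unfolding contract_def inner_op_def by (intro sum.cong refl) (simp add: join_zero_basis)
  ultimately show ?thesis using Z1[OF rr] by simp
qed

lemma contract_tensor_op_right:
  assumes U: "S1 \<subseteq> U" "S2 \<inter> U = {}" and a: "a \<in> basis d S1" and b: "b \<in> basis d S1"
  shows "contract d S2 Q (tensor_op U A B) a b = A a b * inner_op d S2 Q B"
  unfolding contract_def inner_op_def sum_distrib_left
  by (intro sum.cong refl) (simp add: tensor_op_def restr_join_inside[OF a _ U] restr_join_inside[OF b _ U]
        restr_join_outside[OF a _ U] restr_join_outside[OF b _ U])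

lemma contract_tensor_op_left:
  assumes U: "S1 \<subseteq> U" "S2 \<inter> U = {}" and a: "c \<in> basis d S2" and b: "e \<in> basis d S2"
  shows "contract d S1 Q (tensor_op U A B) c e = inner_op d S1 Q A * B c e"
proof -
  have "contract d S1 Q (tensor_op (-U) B A) c e = B c e * inner_op d S1 Q A"
    by (rule contract_tensor_op_right) (use U a b in auto)
  then show ?thesis by (simp add: tensor_op_commute[of U A B] mult.commute)
qed

lemma swap_copy_Lab_1: "swap_copy n ` Lab 1 r = last_copy n r"
proof -
  interpret iv: label_involution "swap_copy n" "dimf dx dy" by (rule label_involution_swap_copy)
  show ?thesis by (simp add: last_copy_def Lab_eq_upto_round lessThan_Suc iv.upto_round_image[symmetric] swap_copy_ans_regs swap_copy_qst_regs)
qed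

lemma prod_indicator: "(\<Prod>k<(n::nat). (if P k then 1 else 0) :: complex) = (if \<forall>k<n. P k then 1 else 0)"
  by (induction n) (auto simp: less_Suc_eq)

lemma tensor_copies_ident_tensor:
  "tensor_copies n (\<lambda>_. ident_tensor (ans_regs {0} j) M) = ident_tensor (ans_regs {..<n} j) (tensor_copies n (\<lambda>_. M))"
proof (intro ext)
  fix a b
  have z: "zero_on (ans_regs {0} j) (loc k a) = loc k (zero_on (ans_regs {..<n} j) a)" if "k < n" for k a
    using that by (auto simp: zero_on_def loc_def ans_regs_def fun_eq_iff)
  have i: "(\<Prod>k<n. idop (ans_regs {0} j) (loc k a) (loc k b)) = idop (ans_regs {..<n} j) a b"
    unfolding idop_def prod_indicator by (auto simp: loc_def ans_regs_def)
  have "tensor_copies n (\<lambda>_. ident_tensor (ans_regs {0} j) M) a b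
      = (\<Prod>k<n. idop (ans_regs {0} j) (loc k a) (loc k b)) * (\<Prod>k<n. M (zero_on (ans_regs {0} j) (loc k a)) (zero_on (ans_regs {0} j) (loc k b)))"
    by (simp add: tensor_copies_def ident_tensor_def prod.distrib)
  also have "\<dots> = idop (ans_regs {..<n} j) a b * (\<Prod>k<n. M (loc k (zero_on (ans_regs {..<n} j) a)) (loc k (zero_on (ans_regs {..<n} j) b)))"
  proof -
    have "(\<Prod>k<n. M (zero_on (ans_regs {0} j) (loc k a)) (zero_on (ans_regs {0} j) (loc k b)))
        = (\<Prod>k<n. M (loc k (zero_on (ans_regs {..<n} j) a)) (loc k (zero_on (ans_regs {..<n} j) b)))"
      by (rule prod.cong) (simp_all add: z)
    then show ?thesis unfolding i by simp
  qed
  finally show "tensor_copies n (\<lambda>_. ident_tensor (ans_regs {0} j) M) a b = ident_tensor (ans_regs {..<n} j) (tensor_copies n (\<lambda>_. M)) a b"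
    by (simp add: ident_tensor_def tensor_copies_def)
qed

lemma loc_in_basis: "a \<in> basis (dimf dx dy) (Lab n r) \<Longrightarrow> k < n \<Longrightarrow> loc k a \<in> basis (dimf dx dy) (Lab 1 r)"
  by (auto simp: basis_def loc_def Lab_def dimf_def split: prod.splits)

lemma op_eq_tensor_copies: "op_eq (dimf dx dy) (Lab 1 r) A B \<Longrightarrow> op_eq (dimf dx dy) (Lab n r) (tensor_copies n (\<lambda>_. A)) (tensor_copies n (\<lambda>_. B))"
  unfolding op_eq_def tensor_copies_def
proof (intro ballI prod.cong refl)
  fix a b k assume h: "\<forall>a\<in>basis (dimf dx dy) (Lab 1 r). \<forall>b\<in>basis (dimf dx dy) (Lab 1 r). A a b = B a b"
    and a: "a \<in> basis (dimf dx dy) (Lab n r)" and b: "b \<in> basis (dimf dx dy) (Lab n r)" and k: "k \<in> {..<n}"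
  show "A (loc k a) (loc k b) = B (loc k a) (loc k b)"
    using h loc_in_basis[OF a] loc_in_basis[OF b] k by simp
qed

lemma reloc_eq_relab: "op_eq d (last_copy n r) (reloc n M) (relab (swap_copy n) M)"
  unfolding op_eq_def reloc_def relab_def using loc_eq_swap_copy[OF _ last_copy_copy_labels] by simp

lemma inner_op_reloc:
  "inner_op (dimf dx dy) (last_copy n r) (reloc n A) M = inner_op (dimf dx dy) (Lab 1 r) A (relab (swap_copy n) M)"
proof -
  interpret iv: label_involution "swap_copy n" "dimf dx dy" by (rule label_involution_swap_copy)
  have rr: "relab (swap_copy n) (relab (swap_copy n) M) = M" by (simp add: relab_def comp_def fun_eq_iff o_def)
  have "inner_op (dimf dx dy) (last_copy n r) (reloc n A) M = inner_op (dimf dx dy) (last_copy n r) (relab (swap_copy n) A) M"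
    by (rule inner_op_cong_left[OF reloc_eq_relab])
  also have "\<dots> = inner_op (dimf dx dy) (swap_copy n ` Lab 1 r) (relab (swap_copy n) A) (relab (swap_copy n) (relab (swap_copy n) M))"
    unfolding rr swap_copy_Lab_1 ..
  also have "\<dots> = inner_op (dimf dx dy) (Lab 1 r) A (relab (swap_copy n) M)" by (rule iv.inner_relab)
  finally show ?thesis .
qed

definition single_value :: "(lab \<Rightarrow> nat) \<Rightarrow> nat \<Rightarrow> nat \<Rightarrow> (nat \<Rightarrow> real) \<Rightarrow> (nat \<Rightarrow> lab op) \<Rightarrow> lab op \<Rightarrow> complex" where
  "single_value d r t vals P Y = (\<Sum>i<t. complex_of_real (vals i) * inner_op d (Lab 1 r) (P i) Y)"

lemma swap_copy_swap_copy: "swap_copy n (swap_copy n l) = l"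
  by (auto simp: swap_copy_def split: prod.splits)

lemma swap_copy_ans_regs_back: "swap_copy n ` ans_regs {n} j = ans_regs {0} j"
proof -
  have "swap_copy n ` ans_regs {n} j = swap_copy n ` (swap_copy n ` ans_regs {0} j)" by (simp only: swap_copy_ans_regs)
  also have "\<dots> = ans_regs {0} j" by (simp add: image_comp comp_def swap_copy_swap_copy)
  finally show ?thesis .
qed

lemma swap_copy_qst_regs_back: "swap_copy n ` qst_regs {n} j = qst_regs {0} j"
proof -
  have "swap_copy n ` qst_regs {n} j = swap_copy n ` (swap_copy n ` qst_regs {0} j)" by (simp only: swap_copy_qst_regs)
  also have "\<dots> = qst_regs {0} j" by (simp add: image_comp comp_def swap_copy_swap_copy)
  finally show ?thesis .
qed

lemma regs_Un_last: "(\<lambda>j. ans_regs {..<n} j \<union> ans_regs {n} j) = ans_regs {..<Suc n}" "(\<lambda>j. qst_regs {..<n} j \<union> qst_regs {n} j) = qst_regs {..<Suc n}"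
  by (auto simp: ans_regs_def qst_regs_def fun_eq_iff)

lemma regs_Un_first: "(\<lambda>j. ans_regs {n} j \<union> ans_regs {..<n} j) = ans_regs {..<Suc n}" "(\<lambda>j. qst_regs {n} j \<union> qst_regs {..<n} j) = qst_regs {..<Suc n}"
  by (auto simp: ans_regs_def qst_regs_def fun_eq_iff)

lemma separated_by_first_copies: "separated_by r (ans_regs {..<n}) (qst_regs {..<n}) (ans_regs {n}) (qst_regs {n}) (copy_labels {..<n})"
  unfolding separated_by_def using ans_regs_copy_labels qst_regs_copy_labels by (fastforce simp: copy_labels_def ans_regs_def qst_regs_def)

lemma separated_by_last_copy: "separated_by r (ans_regs {n}) (qst_regs {n}) (ans_regs {..<n}) (qst_regs {..<n}) (copy_labels {n})"
  unfolding separated_by_def using ans_regs_copy_labels qst_regs_copy_labels by (fastforce simp: copy_labels_def ans_regs_def qst_regs_def)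

lemma costrategy_tensor_copies:
  assumes r1: "1 \<le> r" and Rg: "strategy_on (dimf dx dy) r (qst_regs {0}) (shifted_ans_regs {0}) R"
  shows "strategy_on (dimf dx dy) r (qst_regs {..<n}) (shift_round (ans_regs {..<n})) (\<lambda>j. tensor_copies n (\<lambda>_. R j))"
  using strategy_on_tensor_copies[of r qst_regs shifted_ans_regs dx dy R n, OF r1 qst_regs_Un shifted_ans_regs_Un swap_copy_qst_regs swap_copy_shifted_ans_regs qst_regs_copy_labels shifted_ans_regs_copy_labels disjoint_registers_qst_shifted Rg]
  by (simp add: shifted_ans_regs_def)

lemma costrategy_relab:
  assumes Rg: "strategy_on (dimf dx dy) r (qst_regs {0}) (shifted_ans_regs {0}) R"
  shows "strategy_on (dimf dx dy) r (qst_regs {n}) (shift_round (ans_regs {n})) (\<lambda>j. relab (swap_copy n) (R j))"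
proof -
  interpret iv: label_involution "swap_copy n" "dimf dx dy" by (rule label_involution_swap_copy)
  show ?thesis using iv.strategy_on_relab[OF Rg] unfolding swap_copy_qst_regs swap_copy_shifted_ans_regs by (simp add: shifted_ans_regs_def)
qed

lemma strategy_of_strategy_on:
  assumes "strategy_on d r (ans_regs {..<n}) (qst_regs {..<n}) Xs" "1 \<le> r"
  shows "strategy d r n (Xs r)"
  unfolding strategy_iff_strategy_on using assms by (auto simp: strategy_on_def Lab_eq_upto_round op_eq_def)

lemma relab_reloc: "op_eq (dimf dx dy) (Lab 1 r) (relab (swap_copy n) (reloc n M)) M"
proof -
  interpret iv: label_involution "swap_copy n" "dimf dx dy" by (rule label_involution_swap_copy)
  show ?thesis unfolding op_eq_def
  proof (intro ballI)
    fix a b assume a: "a \<in> basis (dimf dx dy) (Lab 1 r)" and b: "b \<in> basis (dimf dx dy) (Lab 1 r)"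
    have a': "a \<circ> swap_copy n \<in> basis (dimf dx dy) (last_copy n r)"
      unfolding swap_copy_Lab_1[symmetric] iv.basis_image using a by simp
    have b': "b \<circ> swap_copy n \<in> basis (dimf dx dy) (last_copy n r)"
      unfolding swap_copy_Lab_1[symmetric] iv.basis_image using b by simp
    show "relab (swap_copy n) (reloc n M) a b = M a b"
      unfolding relab_def reloc_def loc_eq_swap_copy[OF a' last_copy_copy_labels]
        loc_eq_swap_copy[OF b' last_copy_copy_labels] by simp
  qed
qed

lemma inner_op_reloc_reloc:
  "inner_op (dimf dx dy) (last_copy n r) (reloc n A) (reloc n B) = inner_op (dimf dx dy) (Lab 1 r) A B"
  unfolding inner_op_reloc by (rule inner_op_cong_right[OF relab_reloc])

text \<open>The upper bounds of \<open>A\<close> and \<open>B\<close> coincide, so the equation holds even for unbounded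
  sets, where \<open>Sup\<close> on \<open>real\<close> is a junk value.\<close>
lemma Sup_eq_cofinal:
  fixes A B :: "real set"
  assumes "\<And>x. x \<in> A \<Longrightarrow> \<exists>y\<in>B. x \<le> y" "\<And>y. y \<in> B \<Longrightarrow> \<exists>x\<in>A. y \<le> x"
  shows "Sup A = Sup B"
proof -
  have "(\<lambda>z. \<forall>x\<in>A. x \<le> z) = (\<lambda>z. \<forall>y\<in>B. y \<le> z)"
    using assms by (auto simp: fun_eq_iff) (meson order_trans)+
  then show ?thesis unfolding Sup_real_def by simp
qed

lemma averaged_value_eq:
  "Re (\<Sum>i\<in>PiE {..<n} (\<lambda>_. {..<t}). complex_of_real ((\<Sum>k<n. vals (i k)) / real n) *
      inner_op d (Lab n r) (tensor_copies n (\<lambda>k. P (i k))) X) = Re (total_value d r t vals P n X) / real n"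
proof -
  have "(\<Sum>i\<in>PiE {..<n} (\<lambda>_. {..<t}). complex_of_real ((\<Sum>k<n. vals (i k)) / real n) *
      inner_op d (Lab n r) (tensor_copies n (\<lambda>k. P (i k))) X) = total_value d r t vals P n X / complex_of_real (real n)"
    unfolding total_value_def sum_divide_distrib by (intro sum.cong refl) (simp add: sum_divide_distrib[symmetric])
  then show ?thesis by (simp add: Re_divide_of_real)
qed

section \<open>Values of parallel repetitions\<close>

text \<open>\<open>R\<close> is the verifier viewed as a co-strategy: the interaction with questions and answers
  exchanged, whose final operator tensored with the identity is \<open>\<Sum>s P s\<close>.\<close>
locale costrategy_setting =
  fixes dx dy :: "nat \<Rightarrow> nat" and r t :: nat and vals :: "nat \<Rightarrow> real"
    and P R :: "nat \<Rightarrow> lab op"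
  assumes r1: "1 \<le> r"
    and Rg: "strategy_on (dimf dx dy) r (qst_regs {0}) (shifted_ans_regs {0}) R"
    and RS: "op_eq (dimf dx dy) (Lab 1 r) (\<lambda>a b. \<Sum>s<t. P s a b) (ident_tensor (ans_regs {0} r) (R r))"
begin

abbreviation "d \<equiv> dimf dx dy"
abbreviation "SP \<equiv> \<lambda>a b. \<Sum>s<t. P s a b"
abbreviation "V \<equiv> total_value d r t vals P"
abbreviation "V1 \<equiv> single_value d r t vals P"

lemma contract_last_copy_strategy:
  assumes Xs: "strategy_on d r (ans_regs {..<Suc n}) (qst_regs {..<Suc n}) Xs"
  obtains X' where "strategy d r n X'" and "V n (contract d (last_copy n r) (reloc n SP) (Xs r)) = V n X'"
proof -
  interpret iv: label_involution "swap_copy n" d by (rule label_involution_swap_copy)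
  define Z where "Z j = contract d (upto_round (ans_regs {n}) (qst_regs {n}) j - ans_regs {n} j)
      (relab (swap_copy n) (R j)) (ptrace d (ans_regs {n} j) (Xs j))" for j
  have "strategy_on d r (ans_regs {..<n}) (qst_regs {..<n}) Z"
    unfolding Z_def
    by (rule strategy_on_contract[OF r1 disjoint_registers_ans_qst disjoint_registers_ans_qst
          separated_by_first_copies _ costrategy_relab[OF Rg]]) (use Xs in \<open>simp_all add: regs_Un_last\<close>)
  then have "strategy d r n (Z r)" by (rule strategy_of_strategy_on[OF _ r1])
  moreover have "V n (contract d (last_copy n r) (reloc n SP) (Xs r)) = V n (Z r)"
  proof (rule total_value_cong, unfold op_eq_def, intro ballI)
    fix a b
    have fC: "finite (last_copy n r - ans_regs {n} r)" "finite (ans_regs {n} r)"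
      using finite_last_copy disjoint_registers_finite[OF disjoint_registers_ans_qst[of "{n}"]] r1 by auto
    have CY: "last_copy n r = (last_copy n r - ans_regs {n} r) \<union> ans_regs {n} r"
      unfolding last_copy_def using round_subset_upto_round[of r r "ans_regs {n}" "qst_regs {n}"] r1 by auto
    have "contract d (last_copy n r) (reloc n SP) (Xs r) a b
        = contract d (last_copy n r) (ident_tensor (ans_regs {n} r) (relab (swap_copy n) (R r))) (Xs r) a b"
    proof (rule contract_cong)
      fix c e assume c: "c \<in> basis d (last_copy n r)" and e: "e \<in> basis d (last_copy n r)"
      have "reloc n SP c e = relab (swap_copy n) SP c e" using reloc_eq_relab c e unfolding op_eq_def by blast
      also have "\<dots> = relab (swap_copy n) (ident_tensor (ans_regs {0} r) (R r)) c e"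
        using iv.op_eq_relab[OF RS] c e unfolding swap_copy_Lab_1[symmetric] op_eq_def by blast
      also have "\<dots> = ident_tensor (ans_regs {n} r) (relab (swap_copy n) (R r)) c e"
        by (simp add: iv.ident_tensor_relab swap_copy_ans_regs)
      finally show "reloc n SP c e = ident_tensor (ans_regs {n} r) (relab (swap_copy n) (R r)) c e" .
    qed
    also have "\<dots> = Z r a b"
      unfolding Z_def last_copy_def[symmetric] by (subst CY, rule contract_ident_tensor) (use fC in auto)
    finally show "contract d (last_copy n r) (reloc n SP) (Xs r) a b = Z r a b" .
  qed
  ultimately show ?thesis using that by blast
qed

lemma contract_first_copies_strategy:
  assumes Xs: "strategy_on d r (ans_regs {..<Suc n}) (qst_regs {..<Suc n}) Xs"
  obtains Y where "strategy d r 1 Y" and "(\<Sum>s<t. complex_of_real (vals s) *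
      inner_op d (last_copy n r) (reloc n (P s)) (contract d (Lab n r) (tensor_copies n (\<lambda>_. SP)) (Xs r))) = V1 Y"
proof -
  interpret iv: label_involution "swap_copy n" d by (rule label_involution_swap_copy)
  define RR where "RR j = tensor_copies n (\<lambda>_. R j)" for j
  define Z where "Z j = contract d (upto_round (ans_regs {..<n}) (qst_regs {..<n}) j - ans_regs {..<n} j)
      (RR j) (ptrace d (ans_regs {..<n} j) (Xs j))" for j
  have "strategy_on d r (ans_regs {n}) (qst_regs {n}) Z"
    unfolding Z_def
    by (rule strategy_on_contract[OF r1 disjoint_registers_ans_qst disjoint_registers_ans_qst separated_by_last_copy _
          costrategy_tensor_copies[OF r1 Rg, of n, folded RR_def]]) (use Xs in \<open>simp_all add: regs_Un_first\<close>)
  from iv.strategy_on_relab[OF this]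
  have "strategy_on d r (ans_regs {..<1}) (qst_regs {..<1}) (\<lambda>j. relab (swap_copy n) (Z j))"
    unfolding swap_copy_ans_regs_back swap_copy_qst_regs_back by (simp add: lessThan_Suc)
  then have "strategy d r 1 (relab (swap_copy n) (Z r))" by (rule strategy_of_strategy_on[OF _ r1])
  moreover have "op_eq d (last_copy n r) (contract d (Lab n r) (tensor_copies n (\<lambda>_. SP)) (Xs r)) (Z r)"
  proof (unfold op_eq_def, intro ballI)
    fix c e
    have fL: "finite (Lab n r - ans_regs {..<n} r)" "finite (ans_regs {..<n} r)"
      using finite_Lab disjoint_registers_finite[OF disjoint_registers_ans_qst[of "{..<n}"]] r1 by auto
    have LY: "Lab n r = (Lab n r - ans_regs {..<n} r) \<union> ans_regs {..<n} r"
      unfolding Lab_eq_upto_round using round_subset_upto_round[of r r "ans_regs {..<n}" "qst_regs {..<n}"] r1 by auto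
    have "op_eq d (Lab n r) (tensor_copies n (\<lambda>_. SP)) (ident_tensor (ans_regs {..<n} r) (RR r))"
      using op_eq_tensor_copies[OF RS, of n] unfolding RR_def tensor_copies_ident_tensor .
    then have "contract d (Lab n r) (tensor_copies n (\<lambda>_. SP)) (Xs r) c e
        = contract d (Lab n r) (ident_tensor (ans_regs {..<n} r) (RR r)) (Xs r) c e"
      by (intro contract_cong) (simp add: op_eq_def)
    also have "\<dots> = Z r c e"
      unfolding Z_def Lab_eq_upto_round[symmetric] by (subst LY, rule contract_ident_tensor) (use fL in auto)
    finally show "contract d (Lab n r) (tensor_copies n (\<lambda>_. SP)) (Xs r) c e = Z r c e" .
  qed
  then have "(\<Sum>s<t. complex_of_real (vals s) *
      inner_op d (last_copy n r) (reloc n (P s)) (contract d (Lab n r) (tensor_copies n (\<lambda>_. SP)) (Xs r)))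
      = V1 (relab (swap_copy n) (Z r))"
    unfolding single_value_def inner_op_reloc[symmetric] by (simp add: inner_op_cong_right)
  ultimately show ?thesis using that by blast
qed

lemma total_value_Suc_split:
  assumes "strategy d r (Suc n) X"
  obtains X' Y where "strategy d r n X'" and "strategy d r 1 Y" and "V (Suc n) X = V n X' + V1 Y"
proof -
  obtain Xs where Xs: "strategy_on d r (ans_regs {..<Suc n}) (qst_regs {..<Suc n}) Xs"
    and XX: "op_eq d (Lab (Suc n) r) (Xs r) X"
    using assms unfolding strategy_iff_strategy_on by blast
  obtain X' where "strategy d r n X'" "V n (contract d (last_copy n r) (reloc n SP) (Xs r)) = V n X'"
    using contract_last_copy_strategy[OF Xs] .
  moreover obtain Y where "strategy d r 1 Y" "(\<Sum>s<t. complex_of_real (vals s) *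
      inner_op d (last_copy n r) (reloc n (P s)) (contract d (Lab n r) (tensor_copies n (\<lambda>_. SP)) (Xs r))) = V1 Y"
    using contract_first_copies_strategy[OF Xs] .
  moreover have "V (Suc n) X = V (Suc n) (Xs r)" by (rule total_value_cong[OF op_eq_sym[OF XX]])
  ultimately show ?thesis using that[of X' Y] by (simp only: total_value_Suc)
qed

lemma averaged_value_le_single_value:
  assumes "strategy d r (Suc k) X"
  shows "\<exists>Y. strategy d r 1 Y \<and> Re (V (Suc k) X) / real (Suc k) \<le> Re (V1 Y)"
  using assms
proof (induction k arbitrary: X)
  case 0
  obtain X' Y where "strategy d r 1 Y" "V (Suc 0) X = V 0 X' + V1 Y"
    using total_value_Suc_split[OF "0.prems"] .
  then show ?case by (auto simp: total_value_0)
next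
  case (Suc k)
  obtain X' Y2 where X': "strategy d r (Suc k) X'" and Y2: "strategy d r 1 Y2"
    and e: "V (Suc (Suc k)) X = V (Suc k) X' + V1 Y2"
    using total_value_Suc_split[OF Suc.prems] .
  obtain Y1 where Y1: "strategy d r 1 Y1" and le: "Re (V (Suc k) X') / real (Suc k) \<le> Re (V1 Y1)"
    using Suc.IH[OF X'] by blast
  define M where "M = max (Re (V1 Y1)) (Re (V1 Y2))"
  have "Re (V (Suc k) X') \<le> real (Suc k) * Re (V1 Y1)"
    using le by (simp add: pos_divide_le_eq mult.commute del: of_nat_Suc)
  also have "\<dots> \<le> real (Suc k) * M" unfolding M_def by (intro mult_left_mono) auto
  finally have "Re (V (Suc k) X') \<le> real (Suc k) * M" .
  moreover have "Re (V1 Y2) \<le> M" unfolding M_def by simp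
  ultimately have "Re (V (Suc (Suc k)) X) \<le> real (Suc (Suc k)) * M"
    unfolding e by (simp add: algebra_simps)
  then have "Re (V (Suc (Suc k)) X) / real (Suc (Suc k)) \<le> M"
    by (simp add: divide_le_eq mult.commute del: of_nat_Suc)
  moreover have "\<exists>Y. strategy d r 1 Y \<and> Re (V1 Y) = M" unfolding M_def using Y1 Y2 by (auto simp: max_def)
  ultimately show ?case by metis
qed

lemma inner_costrategy_tensor_power:
  assumes Ys: "strategy_on d r (ans_regs {0}) (qst_regs {0}) Ys"
  shows "inner_op d (Lab 1 r) SP (Ys r) = 1"
    and "inner_op d (Lab n r) (tensor_copies n (\<lambda>_. SP)) (tensor_copies n (\<lambda>_. Ys r)) = 1"
proof -
  have Rg': "strategy_on d r (qst_regs {0}) (shift_round (ans_regs {0})) R"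
    using Rg by (simp add: shifted_ans_regs_def)
  have L1: "Lab 1 r = upto_round (ans_regs {0}) (qst_regs {0}) r" by (simp add: Lab_eq_upto_round lessThan_Suc)
  show "inner_op d (Lab 1 r) SP (Ys r) = 1"
    unfolding inner_op_cong_left[OF RS] unfolding L1
    by (rule inner_costrategy_eq_1[OF r1 disjoint_registers_ans_qst Ys Rg']) simp
  have Gp: "strategy_on d r (ans_regs {..<n}) (qst_regs {..<n}) (\<lambda>j. tensor_copies n (\<lambda>_. Ys j))"
    by (rule strategy_on_tensor_copies[OF r1 ans_regs_Un qst_regs_Un swap_copy_ans_regs swap_copy_qst_regs
          ans_regs_copy_labels qst_regs_copy_labels disjoint_registers_ans_qst Ys])
  have TC: "op_eq d (Lab n r) (tensor_copies n (\<lambda>_. SP)) (ident_tensor (ans_regs {..<n} r) (tensor_copies n (\<lambda>_. R r)))"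
    using op_eq_tensor_copies[OF RS, of n] unfolding tensor_copies_ident_tensor .
  show "inner_op d (Lab n r) (tensor_copies n (\<lambda>_. SP)) (tensor_copies n (\<lambda>_. Ys r)) = 1"
    unfolding inner_op_cong_left[OF TC] unfolding Lab_eq_upto_round
    by (rule inner_costrategy_eq_1[OF r1 disjoint_registers_ans_qst Gp costrategy_tensor_copies[OF r1 Rg]]) simp
qed

text \<open>Each copy of a product strategy contributes the single-copy value, because the
  verifier's total operator \<open>\<Sum>s P s\<close> has inner product 1 with every strategy.\<close>
lemma total_value_tensor_power:
  assumes Ys: "strategy_on d r (ans_regs {0}) (qst_regs {0}) Ys"
  shows "V n (tensor_copies n (\<lambda>_. Ys r)) = of_nat n * V1 (Ys r)"
proof (induction n)
  case 0
  then show ?case by (simp add: total_value_0)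
next
  case (Suc n)
  let ?X = "tensor_copies n (\<lambda>_. Ys r)"
  have U: "Lab n r \<subseteq> copy_labels {..<n}" "last_copy n r \<inter> copy_labels {..<n} = {}"
    using Lab_copy_labels last_copy_disjoint by auto
  have XS: "tensor_copies (Suc n) (\<lambda>_. Ys r) = tensor_op (copy_labels {..<n}) ?X (reloc n (Ys r))"
    unfolding tensor_copies_Suc ..
  have e1: "op_eq d (Lab n r) (contract d (last_copy n r) (reloc n SP) (tensor_copies (Suc n) (\<lambda>_. Ys r))) ?X"
    unfolding op_eq_def XS
    using inner_costrategy_tensor_power(1)[OF Ys] by (simp add: contract_tensor_op_right[OF U] inner_op_reloc_reloc)
  have e2: "op_eq d (last_copy n r) (contract d (Lab n r) (tensor_copies n (\<lambda>_. SP))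
      (tensor_copies (Suc n) (\<lambda>_. Ys r))) (reloc n (Ys r))"
    unfolding op_eq_def XS
    by (simp add: contract_tensor_op_left[OF U] inner_costrategy_tensor_power(2)[OF Ys])
  have "V (Suc n) (tensor_copies (Suc n) (\<lambda>_. Ys r)) = V n ?X
     + (\<Sum>s<t. complex_of_real (vals s) * inner_op d (last_copy n r) (reloc n (P s)) (reloc n (Ys r)))"
    unfolding total_value_Suc total_value_cong[OF e1] inner_op_cong_right[OF e2] ..
  also have "\<dots> = of_nat n * V1 (Ys r) + V1 (Ys r)"
    unfolding Suc.IH single_value_def inner_op_reloc_reloc ..
  finally show ?case by (simp add: algebra_simps)
qed

lemma total_value_of_single_strategy:
  assumes Y: "strategy d r 1 Y"
  shows "\<exists>X. strategy d r m X \<and> V m X = of_nat m * V1 Y"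
proof -
  obtain Ys where Ys1: "strategy_on d r (ans_regs {..<1}) (qst_regs {..<1}) Ys" and YY: "op_eq d (Lab 1 r) (Ys r) Y"
    using Y unfolding strategy_iff_strategy_on by blast
  have Ys: "strategy_on d r (ans_regs {0}) (qst_regs {0}) Ys" using Ys1 by (simp add: lessThan_Suc)
  have "strategy d r m (tensor_copies m (\<lambda>_. Ys r))"
    using strategy_of_strategy_on[OF strategy_on_tensor_copies[OF r1 ans_regs_Un qst_regs_Un swap_copy_ans_regs
          swap_copy_qst_regs ans_regs_copy_labels qst_regs_copy_labels disjoint_registers_ans_qst Ys] r1] .
  moreover have "V1 Y = V1 (Ys r)"
    unfolding single_value_def using inner_op_cong_right[OF op_eq_sym[OF YY]] by simp
  ultimately show ?thesis using total_value_tensor_power[OF Ys] by metis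
qed

end

theorem mainTheorem1:
  fixes r t n :: nat and dx dy :: "nat \<Rightarrow> nat" and vals :: "nat \<Rightarrow> real"
    and P :: "nat \<Rightarrow> lab op"
  assumes "1 \<le> r" and "1 \<le> t" and "1 \<le> n"
    and "\<forall>j\<in>{1..r}. 1 \<le> dx j \<and> 1 \<le> dy j"
    and "verifier (dimf dx dy) r t P"
  shows "Sup {Re (\<Sum>i\<in>PiE {..<n} (\<lambda>_. {..<t}).
                   complex_of_real ((\<Sum>k<n. vals (i k)) / real n) *
                   inner_op (dimf dx dy) (Lab n r) (tensor_copies n (\<lambda>k. P (i k))) X)
          | X. strategy (dimf dx dy) r n X}
       = Sup {Re (\<Sum>i<t. complex_of_real (vals i) * inner_op (dimf dx dy) (Lab 1 r) (P i) X)
          | X. strategy (dimf dx dy) r 1 X}"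
proof -
  obtain R where "strategy_on (dimf dx dy) r (qst_regs {0}) (shifted_ans_regs {0}) R"
    and "op_eq (dimf dx dy) (Lab 1 r) (\<lambda>a b. \<Sum>i<t. P i a b) (ident_tensor (ans_regs {0} r) (R r))"
    using verifier_costrategy[OF assms(1,5)] Lab_eq_upto_round[of 1 r] by (auto simp: lessThan_Suc)
  then interpret costrategy_setting dx dy r t vals P R
    using assms(1) by unfold_locales
  obtain k where n: "n = Suc k" using assms(3) by (cases n) auto
  show ?thesis
    unfolding averaged_value_eq single_value_def[symmetric]
  proof (rule Sup_eq_cofinal; clarify)
    fix X assume "strategy d r n X"
    then show "\<exists>y\<in>{Re (V1 Y) | Y. strategy d r 1 Y}. Re (V n X) / real n \<le> y"
      using averaged_value_le_single_value[of k X] n by blast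
  next
    fix Y assume "strategy d r 1 Y"
    then obtain X where X: "strategy d r n X" and e: "V n X = of_nat n * V1 Y"
      using total_value_of_single_strategy by blast
    have "Re (V n X) / real n = Re (V1 Y)" unfolding e using assms(3) by simp
    then show "\<exists>x\<in>{Re (V n X) / real n | X. strategy d r n X}. Re (V1 Y) \<le> x"
      using X by (metis (mono_tags, lifting) mem_Collect_eq order_refl)
  qed
qed

end
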